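(* Let $\lambda/\mu$ be a skew shape not containing a $3\times 2$ block of cells, with $\ell(\lambda)\le n$. Let $H$ be a $(\lambda,\mu)$-subnetwork and $\vec p=(p_1,\dots,p_n)$ the unique noncrossing path family covering $H$. Then: (1) $H$ is a generalized wiring diagram; (2) there is a unique set $I\subseteq[n-1]$ such that $\beta(H)=2^{\epsilon(H)}\mathbb B(I)$; in particular $\psi(H)=\tau(I)$; (3) for each $i$, the paths $p_i$ and $p_{i+1}$ intersect if and only if $i\in I$; (4) there is a compatible ordering of the essential intersection points of $H$ in which all essential intersection points of $p_1,p_2$ come first, then all those of $p_2,p_3$, and so on (i.e. those of $p_i,p_{i+1}$ precede those of $p_{i+1},p_{i+2}$).
   Context: Skew shapes: for partitions $\mu\subseteq\lambda$, $\lambda/\mu$ is the set of cells $(i,j)$ with $\mu_i<j\le\lambda_i$ (rows top to bottom); it contains a $3\times2$ block of cells iff $\lambda_{i+2}\ge\mu_i+2$ for some $i$. Lattice paths: $\mathcal L$ is the directed graph on $\mathbb Z^2$ with edges $(a,b)\to(a,b-1)$ (south) and $(a,b)\to(a-1,b-1)$ (southwest). The $\mathbf x$-weight of a path is the product of $x_b$ over its southwest steps $(a,b)\to(a-1,b-1)$. A path from $(a,\infty)$ to $B$ consists of infinitely many south steps along the line $x=a$ down to some $(a,N)$ followed by a finite path $(a,N)\to B$. For $\ell(\lambda)\le n$ put $A(\lambda)_i=(\lambda_i+n-i,\infty)$, $B(\mu)_i=(\mu_i+n-i,0)$. A $(\lambda,\mu)$-path family is $\vec p=(p_1,\dots,p_n)$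 with $p_i:A(\lambda)_i\to B(\mu)_{\sigma(i)}$ for some $\sigma\in\mathfrak S_n$, its type. A $(\lambda,\mu)$-subnetwork is the multiset union $H$ of the edges of the paths of some $(\lambda,\mu)$-path family, which is then said to cover $H$. $\beta(H)=\sum_{\vec p}\mathrm{type}(\vec p)\in\mathbb C[\mathfrak S_n]$ over all path families covering $H$. Two paths intersect if they share a vertex. Paths $p,q$ are noncrossing if there are no vertices $(a_1,b),(a_2,b')$ of $p$ and $(c_1,b),(c_2,b')$ of $q$ with $a_1<c_1$ and $c_2<a_2$; a path family is noncrossing if its paths are pairwise noncrossing; every subnetwork is covered by exactly one noncrossing family. If $(p_1,\dots,p_n)$ is the noncrossing family covering $H$, an essential intersection point of $H$ is a vertex lying on both $p_i$ and $p_{i+1}$ (some $i$) such that the preceding vertex on each of these two paths is not in $p_i\cap p_{i+1}$. An ordering $(u_1,\dots,u_\ell)$ of the essential intersection points is compatible if there is no directed path in $H$ from $u_b$ to $u_a$ whenever $a<b$. $H$ is a generalized wiring diagram if no vertex lies on three paths of a covering family (independent of the family). For a generalized wiring diagram, $\theta(\beta(H))=2^{e}\psi$ for a unique integer $e$ and $\psi\in\mathcal B_n$; set $\epsilon(H)=e$, $\psi(H)=\psi$. $\mathrm{TL}_n(2)$, $\mathcal B_n$, $s_i=(i,i+1)$ and $\theta:\mathbb C[\mathfrak S_n]\to\mathrm{TL}_n(2)$, $\theta(s_i)=t_i-1$, are as usual: $\mathrm{TL}_n(2)$ is generated by $t_1,\dots,t_{n-1}$ with $t_i^2=2t_i$,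 $t_it_jt_i=t_i$ ($|i-j|=1$), $t_it_j=t_jt_i$ ($|i-j|\ge2$), with basis $\mathcal B_n$ of Kauffman diagrams. For $I\subseteq[n-1]$, $\mathbb B(I)=\prod_{i\in I}(1+s_i)\in\mathbb C[\mathfrak S_n]$ and $\tau(I)=\prod_{i\in I}t_i\in\mathcal B_n$ (products in increasing order of indices), so $\theta(\mathbb B(I))=\tau(I)$. *)

theory Defs
  imports Complex_Main "HOL-Combinatorics.Transposition" "HOL-Combinatorics.Permutations"
begin

text \<open>A partition is a weakly decreasing, finitely supported sequence lam 1, lam 2, ...
  (index 0 is unused).\<close>
definition is_partition :: "(nat \<Rightarrow> nat) \<Rightarrow> bool" where
  "is_partition lam \<longleftrightarrow> (\<forall>i j. 1 \<le> i \<and> i \<le> j \<longrightarrow> lam j \<le> lam i)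
     \<and> finite {i. 1 \<le> i \<and> lam i \<noteq> 0}"

definition length_le :: "(nat \<Rightarrow> nat) \<Rightarrow> nat \<Rightarrow> bool" where
  "length_le lam n \<longleftrightarrow> (\<forall>i. n < i \<longrightarrow> lam i = 0)"

definition part_contained :: "(nat \<Rightarrow> nat) \<Rightarrow> (nat \<Rightarrow> nat) \<Rightarrow> bool" where
  "part_contained mu lam \<longleftrightarrow> (\<forall>i\<ge>1. mu i \<le> lam i)"

text \<open>lam/mu contains a 3x2 block of cells iff lam (i+2) >= mu i + 2 for some i.\<close>
definition has_3x2_block :: "(nat \<Rightarrow> nat) \<Rightarrow> (nat \<Rightarrow> nat) \<Rightarrow> bool" where
  "has_3x2_block lam mu \<longleftrightarrow> (\<exists>i\<ge>1. lam (i + 2) \<ge> mu i + 2)"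

type_synonym vertex = "int \<times> int"

text \<open>A path from (a,infinity) to (c,0) visits exactly one vertex at every height b >= 0;
  we encode it by its x-coordinate p b at height b. Steps go south or southwest.\<close>
type_synonym lpath = "nat \<Rightarrow> int"

definition vertices :: "lpath \<Rightarrow> vertex set" where
  "vertices p = {(p b, int b) | b. True}"

definition edge_at :: "lpath \<Rightarrow> nat \<Rightarrow> vertex \<times> vertex" where
  "edge_at p b = ((p (Suc b), int (Suc b)), (p b, int b))"

definition lattice_path :: "lpath \<Rightarrow> int \<Rightarrow> vertex \<Rightarrow> bool" where
  "lattice_path p a B \<longleftrightarrow> (p 0, 0) = B
     \<and> (\<forall>b. p (Suc b) = p b \<or> p (Suc b) = p b + 1)
     \<and> (\<exists>N. \<forall>b\<ge>N. p b = a)"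

definition Ax :: "(nat \<Rightarrow> nat) \<Rightarrow> nat \<Rightarrow> nat \<Rightarrow> int" where
  "Ax lam n i = int (lam i) + int n - int i"

definition Bv :: "(nat \<Rightarrow> nat) \<Rightarrow> nat \<Rightarrow> nat \<Rightarrow> vertex" where
  "Bv mu n i = (int (mu i) + int n - int i, 0)"

text \<open>A (lam,mu)-path family of type sigma; paths are indexed by 1..n
  (set to the constant 0 outside, so that families are determined by p_1..p_n).\<close>
definition path_family ::
  "(nat \<Rightarrow> nat) \<Rightarrow> (nat \<Rightarrow> nat) \<Rightarrow> nat \<Rightarrow> (nat \<Rightarrow> lpath) \<Rightarrow> (nat \<Rightarrow> nat) \<Rightarrow> bool" where
  "path_family lam mu n P \<sigma> \<longleftrightarrow> \<sigma> permutes {1..n}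
     \<and> (\<forall>i\<in>{1..n}. lattice_path (P i) (Ax lam n i) (Bv mu n (\<sigma> i)))
     \<and> (\<forall>i. i \<notin> {1..n} \<longrightarrow> P i = (\<lambda>_. 0))"

type_synonym subnetwork = "vertex \<times> vertex \<Rightarrow> nat"

definition edge_mult :: "nat \<Rightarrow> (nat \<Rightarrow> lpath) \<Rightarrow> subnetwork" where
  "edge_mult n P e = card {(i, b). i \<in> {1..n} \<and> edge_at (P i) b = e}"

definition covers :: "nat \<Rightarrow> (nat \<Rightarrow> lpath) \<Rightarrow> subnetwork \<Rightarrow> bool" where
  "covers n P H \<longleftrightarrow> (\<forall>e. H e = edge_mult n P e)"

definition noncrossing_paths :: "lpath \<Rightarrow> lpath \<Rightarrow> bool" where
  "noncrossing_paths p q \<longleftrightarrow> \<not> (\<exists>a1 a2 c1 c2 b b'.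
      (a1, b) \<in> vertices p \<and> (a2, b') \<in> vertices p \<and>
      (c1, b) \<in> vertices q \<and> (c2, b') \<in> vertices q \<and> a1 < c1 \<and> c2 < a2)"

definition noncrossing_family :: "nat \<Rightarrow> (nat \<Rightarrow> lpath) \<Rightarrow> bool" where
  "noncrossing_family n P \<longleftrightarrow> (\<forall>i\<in>{1..n}. \<forall>j\<in>{1..n}. noncrossing_paths (P i) (P j))"

definition paths_intersect :: "lpath \<Rightarrow> lpath \<Rightarrow> bool" where
  "paths_intersect p q \<longleftrightarrow> vertices p \<inter> vertices q \<noteq> {}"

definition gen_wiring_diagram ::
  "(nat \<Rightarrow> nat) \<Rightarrow> (nat \<Rightarrow> nat) \<Rightarrow> nat \<Rightarrow> subnetwork \<Rightarrow> bool" where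
  "gen_wiring_diagram lam mu n H \<longleftrightarrow> (\<forall>Q \<sigma>. path_family lam mu n Q \<sigma> \<and> covers n Q H \<longrightarrow>
     \<not> (\<exists>v i j k. i \<in> {1..n} \<and> j \<in> {1..n} \<and> k \<in> {1..n} \<and> i \<noteq> j \<and> j \<noteq> k \<and> i \<noteq> k
          \<and> v \<in> vertices (Q i) \<and> v \<in> vertices (Q j) \<and> v \<in> vertices (Q k)))"

text \<open>Elements of C[S_n] are functions from permutations of {1..n} to complex numbers.
  Product convention: u v means "first u, then v", i.e. the function v o u.\<close>
type_synonym galg = "(nat \<Rightarrow> nat) \<Rightarrow> complex"

definition ga_basis :: "(nat \<Rightarrow> nat) \<Rightarrow> galg" where
  "ga_basis w = (\<lambda>v. if v = w then 1 else 0)"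

definition ga_add :: "galg \<Rightarrow> galg \<Rightarrow> galg" where
  "ga_add f g = (\<lambda>w. f w + g w)"

definition ga_mult :: "nat \<Rightarrow> galg \<Rightarrow> galg \<Rightarrow> galg" where
  "ga_mult n f g = (\<lambda>w. \<Sum>u\<in>{u. u permutes {1..n}}. \<Sum>v\<in>{v. v permutes {1..n}}.
       if v \<circ> u = w then f u * g v else 0)"

definition sadj :: "nat \<Rightarrow> nat \<Rightarrow> nat" where
  "sadj i = transpose i (Suc i)"

definition BB :: "nat \<Rightarrow> nat set \<Rightarrow> galg" where
  "BB n I = foldl (\<lambda>acc i. ga_mult n acc (ga_add (ga_basis id) (ga_basis (sadj i))))
              (ga_basis id) (sorted_list_of_set I)"

definition beta :: "(nat \<Rightarrow> nat) \<Rightarrow> (nat \<Rightarrow> nat) \<Rightarrow> nat \<Rightarrow> subnetwork \<Rightarrow> galg" where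
  "beta lam mu n H = (\<lambda>w. of_nat (card {Q. path_family lam mu n Q w \<and> covers n Q H}))"

definition preceding :: "lpath \<Rightarrow> vertex \<Rightarrow> vertex \<Rightarrow> bool" where
  "preceding p v u \<longleftrightarrow> (\<exists>b. v = (p b, int b) \<and> u = (p (Suc b), int (Suc b)))"

definition ess_points :: "(nat \<Rightarrow> lpath) \<Rightarrow> nat \<Rightarrow> vertex set" where
  "ess_points P i = {v. v \<in> vertices (P i) \<inter> vertices (P (Suc i))
      \<and> (\<forall>u. preceding (P i) v u \<longrightarrow> u \<notin> vertices (P i) \<inter> vertices (P (Suc i)))
      \<and> (\<forall>u. preceding (P (Suc i)) v u \<longrightarrow> u \<notin> vertices (P i) \<inter> vertices (P (Suc i)))}"

definition all_ess_points :: "nat \<Rightarrow> (nat \<Rightarrow> lpath) \<Rightarrow> vertex set" where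
  "all_ess_points n P = (\<Union>i\<in>{1..<n}. ess_points P i)"

definition reach :: "subnetwork \<Rightarrow> (vertex \<times> vertex) set" where
  "reach H = {(u, v). 0 < H (u, v)}\<^sup>*"

definition compatible_ordering ::
  "nat \<Rightarrow> (nat \<Rightarrow> lpath) \<Rightarrow> subnetwork \<Rightarrow> vertex list \<Rightarrow> bool" where
  "compatible_ordering n P H us \<longleftrightarrow> distinct us \<and> set us = all_ess_points n P
     \<and> (\<forall>a b. a < b \<and> b < length us \<longrightarrow> (us ! b, us ! a) \<notin> reach H)"

end

(* If no 3x2 block fits into lam/mu, the top end of path i+2 lies strictly to the left of the
   bottom end of path i, so paths two apart never meet.  Hence at most two paths, and then two
   consecutive ones, pass through any vertex, which is (1); moreover the contacts of p_(i+1) and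
   p_(i+2) all lie below those of p_i and p_(i+1).

   Every family covering H arises from the noncrossing family by choosing a set C of divergence
   points (heights where p_i and p_(i+1) part when going down) and exchanging the two tails
   there, and distinct choices give distinct families.  By the ordering of the contacts, the
   type of the family is the product, in increasing order of i, of s_i over the pairs i carrying
   an odd number of chosen points.  Counting choices gives beta(H) = 2^(|R| - |I|) B(I), with R
   the set of divergence points and I the set of pairs that meet; since the coefficient of s_i
   in B(I) is nonzero exactly for i in I, this gives (2) and (3).

   For (4), list the essential points pair by pair and each pair from top to bottom: directed
   paths of H only go down and to the left, whereas the points of a later pair lie on p_(j+1),
   strictly to the left of p_i. *)

theory Submission
  imports Defs "HOL-Library.Product_Lexorder"
begin

definition sadj_prod :: "nat set \<Rightarrow> nat \<Rightarrow> nat" where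
  "sadj_prod S = foldl (\<lambda>f i. sadj i \<circ> f) id (sorted_list_of_set S)"

lemma foldl_sadj_comp:
  "foldl (\<lambda>f i. sadj i \<circ> f) (g :: nat \<Rightarrow> nat) xs = foldl (\<lambda>f i. sadj i \<circ> f) id xs \<circ> g"
proof (induction xs arbitrary: g)
  case (Cons x xs)
  show ?case
    using Cons.IH[of "sadj x \<circ> g"] Cons.IH[of "sadj x"] by (simp add: comp_assoc)
qed simp

lemma foldl_sadj_append:
  "foldl (\<lambda>f i. sadj i \<circ> f) id (xs @ ys)
     = foldl (\<lambda>f i. sadj i \<circ> f) id ys \<circ> foldl (\<lambda>f i. sadj i \<circ> f) id xs"
  by (simp only: foldl_append, rule foldl_sadj_comp)

lemma sorted_list_of_set_Un_less:
  fixes A B :: "nat set"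
  assumes "finite A" "finite B" "\<forall>a\<in>A. \<forall>b\<in>B. a < b"
  shows "sorted_list_of_set (A \<union> B) = sorted_list_of_set A @ sorted_list_of_set B"
  by (rule strict_sorted_equal) (use assms in \<open>auto simp: sorted_wrt_append\<close>)

lemma list_sorted_by_key:
  fixes k :: "'a \<Rightarrow> 'b::linorder"
  assumes "finite A" "inj_on k A"
  obtains xs where "distinct xs" "set xs = A"
    "\<And>a b. a < b \<Longrightarrow> b < length xs \<Longrightarrow> k (xs ! a) < k (xs ! b)"
proof
  define ys where "ys = sorted_list_of_set (k ` A)"
  have ys: "sorted_wrt (<) ys" "distinct ys" "set ys = k ` A"
    using assms(1) unfolding ys_def by simp_all
  show "distinct (map (the_inv_into A k) ys)"
    using ys inj_on_the_inv_into[OF assms(2)] by (simp add: distinct_map)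
  show "set (map (the_inv_into A k) ys) = A"
    using ys assms(2) by simp
  fix a b assume ab: "a < b" "b < length (map (the_inv_into A k) ys)"
  have "k (the_inv_into A k (ys ! i)) = ys ! i" if "i < length ys" for i
    using f_the_inv_into_f[OF assms(2)] ys(3) nth_mem[OF that] by blast
  then show "k (map (the_inv_into A k) ys ! a) < k (map (the_inv_into A k) ys ! b)"
    using sorted_wrt_nth_less[OF ys(1)] ab by simp
qed

lemma sadj_prod_Un:
  assumes "finite A" "finite B" "\<forall>a\<in>A. \<forall>b\<in>B. a < b"
  shows "sadj_prod (A \<union> B) = sadj_prod B \<circ> sadj_prod A"
  unfolding sadj_prod_def sorted_list_of_set_Un_less[OF assms] by (rule foldl_sadj_append)

lemma sadj_prod_empty [simp]: "sadj_prod {} = id"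
  by (simp add: sadj_prod_def)

lemma sadj_prod_singleton [simp]: "sadj_prod {i} = sadj i"
  by (simp add: sadj_prod_def)

lemma sadj_prod_insert_greater:
  assumes "finite S" "\<forall>x\<in>S. x < m"
  shows "sadj_prod (insert m S) = sadj m \<circ> sadj_prod S"
  using sadj_prod_Un[of S "{m}"] assms by simp

lemma sadj_sadj [simp]: "sadj i (sadj i x) = x"
  by (simp add: sadj_def)

lemma sadj_comp_sadj [simp]: "sadj i \<circ> sadj i = id"
  by (simp add: fun_eq_iff)

lemma sadj_comp_cancel: "sadj i \<circ> u = w \<longleftrightarrow> u = sadj i \<circ> w"
  unfolding fun_eq_iff comp_def by (metis sadj_sadj)

lemma sadj_commute: "Suc i < j \<Longrightarrow> sadj i \<circ> sadj j = sadj j \<circ> sadj i"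
  by (auto simp: fun_eq_iff sadj_def transpose_def)

lemma sadj_permutes: "1 \<le> i \<Longrightarrow> i < n \<Longrightarrow> sadj i permutes {1..n}"
  unfolding sadj_def by (rule permutes_swap_id) auto

lemma sadj_commute_foldl:
  assumes "\<forall>x\<in>set xs. Suc i < x"
  shows "sadj i \<circ> foldl (\<lambda>f i. sadj i \<circ> f) id xs = foldl (\<lambda>f i. sadj i \<circ> f) id xs \<circ> sadj i"
  using assms
proof (induction xs rule: rev_induct)
  case (snoc x xs)
  have "sadj i \<circ> sadj x = sadj x \<circ> sadj i"
    using snoc.prems by (intro sadj_commute) simp
  moreover have "sadj i \<circ> foldl (\<lambda>f i. sadj i \<circ> f) id xs = foldl (\<lambda>f i. sadj i \<circ> f) id xs \<circ> sadj i"
    by (rule snoc.IH) (use snoc.prems in simp)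
  ultimately show ?case by (simp only: foldl_append foldl_Cons foldl_Nil) (metis comp_assoc)
qed simp

lemma sadj_commute_sadj_prod:
  "finite U \<Longrightarrow> \<forall>x\<in>U. Suc i < x \<Longrightarrow> sadj i \<circ> sadj_prod U = sadj_prod U \<circ> sadj i"
  unfolding sadj_prod_def by (intro sadj_commute_foldl) simp

lemma sadj_comp_sadj_prod:
  assumes "finite T" "Suc i \<notin> T"
  shows "sadj i \<circ> sadj_prod T = sadj_prod (sym_diff T {i})"
proof -
  define L where "L = {x\<in>T. x < i}"
  define U where "U = {x\<in>T. i < x}"
  have fin: "finite L" "finite U" using assms by (auto simp: L_def U_def)
  have "\<forall>x\<in>U. Suc i < x" using assms by (auto simp: U_def) (metis Suc_lessI)
  then have commute: "sadj i (sadj_prod U y) = sadj_prod U (sadj i y)" for y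
    using sadj_commute_sadj_prod[OF fin(2)] by (metis comp_apply)
  have split: "sadj_prod (L \<union> U) = sadj_prod U \<circ> sadj_prod L"
    by (rule sadj_prod_Un) (use fin in \<open>auto simp: L_def U_def\<close>)
  have "sadj_prod (L \<union> ({i} \<union> U)) = sadj_prod ({i} \<union> U) \<circ> sadj_prod L"
    by (rule sadj_prod_Un) (use fin in \<open>auto simp: L_def U_def\<close>)
  also have "sadj_prod ({i} \<union> U) = sadj_prod U \<circ> sadj i"
    by (subst sadj_prod_Un) (use fin in \<open>auto simp: U_def\<close>)
  finally have split_i: "sadj_prod (L \<union> ({i} \<union> U)) = sadj_prod U \<circ> sadj i \<circ> sadj_prod L" .
  show ?thesis
  proof (cases "i \<in> T")
    case True
    then have "T = L \<union> ({i} \<union> U)" "sym_diff T {i} = L \<union> U"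
      by (auto simp: L_def U_def)
    then show ?thesis by (simp only: split_i split) (simp add: fun_eq_iff commute)
  next
    case False
    then have "T = L \<union> U" "sym_diff T {i} = L \<union> ({i} \<union> U)"
      by (auto simp: L_def U_def) (metis linorder_neqE_nat)
    then show ?thesis by (simp only: split_i split) (simp add: fun_eq_iff commute)
  qed
qed

lemma foldl_sadj_permutes:
  "set xs \<subseteq> {1..<n} \<Longrightarrow> foldl (\<lambda>f i. sadj i \<circ> f) id xs permutes {1..n}"
proof (induction xs rule: rev_induct)
  case (snoc x xs)
  have "foldl (\<lambda>f i. sadj i \<circ> f) id xs permutes {1..n}"
    by (rule snoc.IH) (use snoc.prems in auto)
  moreover have "sadj x permutes {1..n}"
    using snoc.prems by (intro sadj_permutes) auto
  ultimately show ?case by (simp only: foldl_append foldl_Cons foldl_Nil permutes_compose)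
qed (simp only: foldl_Nil permutes_id)

lemma sadj_prod_permutes: "finite S \<Longrightarrow> S \<subseteq> {1..<n} \<Longrightarrow> sadj_prod S permutes {1..n}"
  unfolding sadj_prod_def by (rule foldl_sadj_permutes) simp

lemma sadj_prod_Max:
  assumes "finite S" "S \<noteq> {}"
  shows "sadj_prod S (Suc (Max S)) = Max S"
proof -
  define m where "m = Max S"
  have less: "\<forall>x\<in>S - {m}. x < m" using assms by (auto simp: m_def order.strict_iff_order)
  have "sadj_prod S = sadj m \<circ> sadj_prod (S - {m})"
    using sadj_prod_insert_greater[of "S - {m}" m] assms less by (simp add: m_def insert_absorb)
  moreover have "foldl (\<lambda>f i. sadj i \<circ> f) id xs (Suc m) = Suc m" if "\<forall>x\<in>set xs. x < m" for xs
    using that by (induction xs rule: rev_induct) (auto simp: sadj_def transpose_def)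
  then have "sadj_prod (S - {m}) (Suc m) = Suc m"
    unfolding sadj_prod_def using assms less by simp
  ultimately show ?thesis by (simp add: m_def sadj_def)
qed

lemma sadj_prod_eq_sadj_imp_mem:
  assumes "finite S" "sadj_prod S = sadj i"
  shows "i \<in> S"
proof (cases "S = {}")
  case True
  then have "sadj i i = i" using assms by simp
  then show ?thesis by (simp add: sadj_def)
next
  case False
  have "sadj i (Suc (Max S)) = Max S" using sadj_prod_Max[OF assms(1) False] assms(2) by simp
  then have "Max S = i" unfolding sadj_def transpose_def
    by (cases "Suc (Max S) = i"; cases "Max S = i"; simp)
  then show ?thesis using False assms(1) Max_in by blast
qed

lemma permutes_strict_mono_id:
  fixes \<sigma> :: "nat \<Rightarrow> nat"
  assumes perm: "\<sigma> permutes {1..n}"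
    and mono: "\<And>i j. 1 \<le> i \<Longrightarrow> i < j \<Longrightarrow> j \<le> n \<Longrightarrow> \<sigma> i < \<sigma> j"
  shows "\<sigma> = id"
proof -
  have img: "\<And>x. x \<in> {1..n} \<Longrightarrow> \<sigma> x \<in> {1..n}" using permutes_in_image[OF perm] by blast
  have ge: "1 \<le> k \<longrightarrow> k \<le> n \<longrightarrow> k \<le> \<sigma> k" for k
  proof (induction k)
    case (Suc k)
    then show ?case using img[of 1] mono[of k "Suc k"] by (cases "k = 0") auto
  qed simp
  have le: "\<forall>k. 1 \<le> k \<longrightarrow> k \<le> n \<longrightarrow> n - k = t \<longrightarrow> \<sigma> k \<le> k" for t
  proof (induction t)
    case 0 then show ?case using img by fastforce
  next
    case (Suc t)
    show ?case
    proof (intro allI impI)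
      fix k assume k: "1 \<le> k" "k \<le> n" "n - k = Suc t"
      then have "\<sigma> (Suc k) \<le> Suc k" using Suc.IH by auto
      moreover have "\<sigma> k < \<sigma> (Suc k)" using mono[of k "Suc k"] k by auto
      ultimately show "\<sigma> k \<le> k" by simp
    qed
  qed
  have "\<sigma> k = k" if "k \<in> {1..n}" for k
    using ge[of k] le[of "n - k"] that by force
  then show ?thesis using permutes_not_in[OF perm] by (metis eq_id_iff)
qed

definition swap_pairs :: "nat set \<Rightarrow> nat \<Rightarrow> nat" where
  "swap_pairs D j = (if j \<in> D then Suc j else if 0 < j \<and> j - 1 \<in> D then j - 1 else j)"

lemma swap_pairs_empty [simp]: "swap_pairs {} = id"
  by (auto simp: swap_pairs_def fun_eq_iff)

lemma swap_pairs_insert: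
  assumes "i \<notin> D" "0 \<notin> insert i D" "\<forall>x\<in>insert i D. Suc x \<notin> insert i D"
  shows "swap_pairs (insert i D) = sadj i \<circ> swap_pairs D"
proof
  fix j
  have sadj_other: "\<And>y. y \<noteq> i \<Longrightarrow> y \<noteq> Suc i \<Longrightarrow> sadj i y = y" by (simp add: sadj_def)
  have si: "sadj i i = Suc i" "sadj i (Suc i) = i" by (simp_all add: sadj_def)
  show "swap_pairs (insert i D) j = (sadj i \<circ> swap_pairs D) j"
  proof (cases "j \<in> D")
    case True
    then have "Suc j \<noteq> i" "Suc j \<noteq> Suc i" using assms by auto
    then show ?thesis using True by (simp add: swap_pairs_def sadj_other)
  next
    case jD: False
    show ?thesis
    proof (cases "0 < j \<and> j - 1 \<in> D")
      case True
      then have "j \<noteq> i" using assms by (metis Suc_pred' insertCI)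
      moreover have "j - 1 \<noteq> i" "j - 1 \<noteq> Suc i" using True assms by auto
      ultimately show ?thesis using True jD by (simp add: swap_pairs_def sadj_other)
    next
      case False
      have sD: "swap_pairs D j = j" using False jD unfolding swap_pairs_def by auto
      consider "j = i" | "j = Suc i" | "j \<noteq> i" "j \<noteq> Suc i" by blast
      then show ?thesis
      proof cases
        case 1 then show ?thesis using sD si False jD by (simp add: swap_pairs_def)
      next
        case 2 then show ?thesis using sD si assms by (simp add: swap_pairs_def)
      next
        case 3
        then have "\<not> (0 < j \<and> j - 1 = i)" by auto
        then have "swap_pairs (insert i D) j = j" using False jD 3 unfolding swap_pairs_def by auto
        then show ?thesis using sD 3 by (simp add: sadj_other)
      qed
    qed
  qed
qed

lemma sadj_prod_symdiff:
  assumes "finite D" "finite S" "0 \<notin> D" "\<forall>x\<in>D. Suc x \<notin> D" "\<forall>x\<in>D. Suc x \<notin> S"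
  shows "sadj_prod (sym_diff S D) = swap_pairs D \<circ> sadj_prod S"
  using assms
proof (induction D rule: finite_induct)
  case empty then show ?case by simp
next
  case (insert i D)
  define T where "T = sym_diff S D"
  have IH: "sadj_prod T = swap_pairs D \<circ> sadj_prod S" using insert by (simp add: T_def comp_def)
  have fT: "finite T" using insert by (simp add: T_def)
  have sT: "Suc i \<notin> T" using insert by (auto simp: T_def)
  have e: "sym_diff S (insert i D) = sym_diff T {i}"
    using insert by (auto simp: T_def)
  have sw: "swap_pairs (insert i D) = sadj i \<circ> swap_pairs D" using swap_pairs_insert[of i D] insert by simp
  have "sadj_prod (sym_diff S (insert i D)) = sadj i \<circ> sadj_prod T"
    unfolding e by (rule sadj_comp_sadj_prod[OF fT sT, symmetric])
  also have "\<dots> = (sadj i \<circ> swap_pairs D) \<circ> sadj_prod S" unfolding IH by (simp add: comp_assoc)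
  finally show ?case unfolding sw .
qed

section \<open>The elements B(I) of the group algebra\<close>

lemma ga_mult_add_right: "ga_mult n f (ga_add g h) = ga_add (ga_mult n f g) (ga_mult n f h)"
proof -
  have "(if v \<circ> u = w then f u * (g v + h v) else 0)
      = (if v \<circ> u = w then f u * g v else 0) + (if v \<circ> u = w then f u * h v else 0)" for u v w
    by (simp add: distrib_left)
  then show ?thesis unfolding ga_mult_def ga_add_def by (simp only: sum.distrib)
qed

lemma ga_mult_basis_right:
  assumes v: "v permutes {1..n}"
  shows "ga_mult n f (ga_basis v) w = (if w permutes {1..n} then f (inv v \<circ> w) else 0)"
proof -
  let ?perms = "{u. u permutes {1..n}}"
  have fin: "finite ?perms" by (rule finite_permutations) simp
  have "(\<Sum>v'\<in>?perms. if v' \<circ> u = w then f u * (if v' = v then 1 else 0) else 0)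
      = (if v \<circ> u = w then f u else 0)" for u
  proof -
    have "(\<Sum>v'\<in>?perms. if v' \<circ> u = w then f u * (if v' = v then 1 else 0) else 0)
        = (\<Sum>v'\<in>?perms. if v' = v then (if v \<circ> u = w then f u else 0) else 0)"
      by (rule sum.cong) auto
    also have "\<dots> = (if v \<circ> u = w then f u else 0)" using fin v by (simp add: sum.delta)
    finally show ?thesis .
  qed
  then have "ga_mult n f (ga_basis v) w = (\<Sum>u\<in>?perms. if v \<circ> u = w then f u else 0)"
    unfolding ga_mult_def ga_basis_def by simp
  also have "\<dots> = (\<Sum>u\<in>?perms. if u = inv v \<circ> w then f u else 0)"
    using permutes_inv_o[OF v] by (intro sum.cong refl) (metis comp_assoc comp_id id_comp)
  also have "\<dots> = (if inv v \<circ> w permutes {1..n} then f (inv v \<circ> w) else 0)"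
    using fin by (simp add: sum.delta')
  also have "inv v \<circ> w permutes {1..n} \<longleftrightarrow> w permutes {1..n}"
  proof
    assume "inv v \<circ> w permutes {1..n}"
    then have "v \<circ> (inv v \<circ> w) permutes {1..n}" using v by (rule permutes_compose)
    then show "w permutes {1..n}" by (simp add: comp_assoc[symmetric] permutes_inv_o(1)[OF v])
  qed (rule permutes_compose[OF _ permutes_inv[OF v]])
  finally show ?thesis .
qed

lemma inv_sadj: "inv (sadj i) = sadj i"
  by (simp add: sadj_def inv_swap_id)

lemma subsets_insert_greater_sadj_prod:
  assumes "finite A" "\<forall>x\<in>A. x < m"
  shows "{S. S \<subseteq> insert m A \<and> sadj_prod S = w}
    = {S. S \<subseteq> A \<and> sadj_prod S = w} \<union> insert m ` {S. S \<subseteq> A \<and> sadj_prod S = sadj m \<circ> w}"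
proof -
  have prod_insert: "sadj_prod (insert m T) = sadj m \<circ> sadj_prod T" if "T \<subseteq> A" for T
    using sadj_prod_insert_greater[of T m] assms that by (meson finite_subset subsetD)
  show ?thesis
  proof (intro equalityI subsetI)
    fix S assume S: "S \<in> {S. S \<subseteq> insert m A \<and> sadj_prod S = w}"
    show "S \<in> {S. S \<subseteq> A \<and> sadj_prod S = w} \<union> insert m ` {S. S \<subseteq> A \<and> sadj_prod S = sadj m \<circ> w}"
    proof (cases "m \<in> S")
      case True
      define T where "T = S - {m}"
      have T: "S = insert m T" "T \<subseteq> A" using S True unfolding T_def by auto
      then have "sadj m \<circ> sadj_prod T = w" using S prod_insert by simp
      then have "sadj_prod T = sadj m \<circ> w" unfolding sadj_comp_cancel .
      then show ?thesis using T by blast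
    qed (use S in auto)
  next
    fix S assume "S \<in> {S. S \<subseteq> A \<and> sadj_prod S = w} \<union> insert m ` {S. S \<subseteq> A \<and> sadj_prod S = sadj m \<circ> w}"
    then show "S \<in> {S. S \<subseteq> insert m A \<and> sadj_prod S = w}"
    proof
      assume "S \<in> insert m ` {S. S \<subseteq> A \<and> sadj_prod S = sadj m \<circ> w}"
      then obtain T where T: "S = insert m T" "T \<subseteq> A" "sadj_prod T = sadj m \<circ> w" by blast
      then have "sadj_prod S = sadj m \<circ> (sadj m \<circ> w)" using prod_insert by simp
      then show ?thesis using T by (auto simp: comp_assoc[symmetric])
    qed auto
  qed
qed

lemma card_subsets_insert_greater_sadj_prod:
  assumes "finite A" "\<forall>x\<in>A. x < m"
  shows "card {S. S \<subseteq> insert m A \<and> sadj_prod S = w}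
    = card {S. S \<subseteq> A \<and> sadj_prod S = w} + card {S. S \<subseteq> A \<and> sadj_prod S = sadj m \<circ> w}"
proof -
  have m: "m \<notin> A" using assms(2) by blast
  have "inj_on (insert m) {S. S \<subseteq> A \<and> sadj_prod S = sadj m \<circ> w}"
  proof (rule inj_onI)
    fix X Y assume "X \<in> {S. S \<subseteq> A \<and> sadj_prod S = sadj m \<circ> w}"
      "Y \<in> {S. S \<subseteq> A \<and> sadj_prod S = sadj m \<circ> w}" "insert m X = insert m Y"
    moreover from this have "m \<notin> X" "m \<notin> Y" using m by auto
    ultimately show "X = Y" by (metis Diff_insert_absorb)
  qed
  moreover have "{S. S \<subseteq> A \<and> sadj_prod S = w} \<inter> insert m ` {S. S \<subseteq> A \<and> sadj_prod S = sadj m \<circ> w} = {}"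
    using m by blast
  ultimately show ?thesis
    unfolding subsets_insert_greater_sadj_prod[OF assms] using assms(1)
    by (simp add: card_Un_disjoint card_image)
qed

lemma ga_mult_one_plus_sadj:
  assumes "1 \<le> m" "m < n"
  shows "ga_mult n f (ga_add (ga_basis id) (ga_basis (sadj m))) w
    = (if w permutes {1..n} then f w + f (sadj m \<circ> w) else 0)"
  unfolding ga_mult_add_right
  unfolding ga_add_def ga_mult_basis_right[OF permutes_id] ga_mult_basis_right[OF sadj_permutes[OF assms]]
  by (simp add: inv_sadj)

lemma sadj_prod_subsets_nonperm:
  assumes "A \<subseteq> {1..<n}" "\<not> w permutes {1..n}"
  shows "{S. S \<subseteq> A \<and> sadj_prod S = w} = {}"
proof -
  have "finite A" using assms(1) finite_subset by blast
  then have "sadj_prod S permutes {1..n}" if "S \<subseteq> A" for S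
    using sadj_prod_permutes[of S n] that assms(1) by (meson finite_subset subset_trans)
  then show ?thesis using assms(2) by blast
qed

lemma foldl_BB_eq_card:
  assumes "sorted_wrt (<) xs" "set xs \<subseteq> {1..<n}"
  shows "foldl (\<lambda>acc i. ga_mult n acc (ga_add (ga_basis id) (ga_basis (sadj i)))) (ga_basis id) xs
     = (\<lambda>w. of_nat (card {S. S \<subseteq> set xs \<and> sadj_prod S = w}))"
  using assms
proof (induction xs rule: rev_induct)
  case Nil
  have "{S. S \<subseteq> {} \<and> sadj_prod S = w} = (if w = id then {{}} else {})" for w
    by auto
  then show ?case by (auto simp: ga_basis_def fun_eq_iff)
next
  case (snoc m xs)
  have m: "1 \<le> m" "m < n" "\<forall>x\<in>set xs. x < m" and xs: "sorted_wrt (<) xs" "set xs \<subseteq> {1..<n}"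
    using snoc.prems by (auto simp: sorted_wrt_append)
  define F where "F = foldl (\<lambda>acc i. ga_mult n acc (ga_add (ga_basis id) (ga_basis (sadj i)))) (ga_basis id) xs"
  have F: "F u = of_nat (card {S. S \<subseteq> set xs \<and> sadj_prod S = u})" for u
    by (simp only: F_def snoc.IH[OF xs])
  show ?case
  proof
    fix w
    have "foldl (\<lambda>acc i. ga_mult n acc (ga_add (ga_basis id) (ga_basis (sadj i)))) (ga_basis id) (xs @ [m]) w
        = (if w permutes {1..n} then F w + F (sadj m \<circ> w) else 0)"
      unfolding F_def by (simp only: foldl_append foldl_Cons foldl_Nil ga_mult_one_plus_sadj[OF m(1,2)])
    also have "\<dots> = of_nat (card {S. S \<subseteq> set (xs @ [m]) \<and> sadj_prod S = w})"
    proof (cases "w permutes {1..n}")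
      case False
      have nperm: "\<not> sadj m \<circ> w permutes {1..n}"
      proof
        assume "sadj m \<circ> w permutes {1..n}"
        then have "sadj m \<circ> (sadj m \<circ> w) permutes {1..n}"
          using sadj_permutes[OF m(1,2)] by (rule permutes_compose)
        then show False using False by (simp add: comp_assoc[symmetric])
      qed
      have "card {S. S \<subseteq> insert m (set xs) \<and> sadj_prod S = w} = 0"
        unfolding card_subsets_insert_greater_sadj_prod[OF finite_set m(3)]
          sadj_prod_subsets_nonperm[OF xs(2) False] sadj_prod_subsets_nonperm[OF xs(2) nperm] by simp
      then show ?thesis using False by simp
    qed (simp add: F card_subsets_insert_greater_sadj_prod[OF finite_set m(3)])
    finally show "foldl (\<lambda>acc i. ga_mult n acc (ga_add (ga_basis id) (ga_basis (sadj i)))) (ga_basis id) (xs @ [m]) w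
        = of_nat (card {S. S \<subseteq> set (xs @ [m]) \<and> sadj_prod S = w})" .
  qed
qed

lemma BB_eq_card:
  assumes "I \<subseteq> {1..<n}"
  shows "BB n I w = of_nat (card {S. S \<subseteq> I \<and> sadj_prod S = w})"
proof -
  have "finite I" using assms finite_subset by blast
  then show ?thesis using foldl_BB_eq_card[of "sorted_list_of_set I" n] assms unfolding BB_def by simp
qed

lemma BB_sadj_nonzero_iff:
  assumes I: "I \<subseteq> {1..<n}"
  shows "BB n I (sadj i) \<noteq> 0 \<longleftrightarrow> i \<in> I"
proof -
  have fin: "finite I" using I finite_subset by blast
  have "finite {S. S \<subseteq> I \<and> sadj_prod S = sadj i}"
    by (rule finite_subset[of _ "Pow I"]) (use fin in auto)
  then have "BB n I (sadj i) \<noteq> 0 \<longleftrightarrow> (\<exists>S\<subseteq>I. sadj_prod S = sadj i)"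
    unfolding BB_eq_card[OF I] by auto
  also have "\<dots> \<longleftrightarrow> i \<in> I"
    using fin by (metis empty_subsetI finite_subset insert_subset sadj_prod_eq_sadj_imp_mem
        sadj_prod_singleton subset_iff)
  finally show ?thesis .
qed

lemma scaled_BB_inj:
  assumes "I \<subseteq> {1..<n}" "J \<subseteq> {1..<n}"
    and "(\<lambda>w. (2::complex) powi e * BB n I w) = (\<lambda>w. 2 powi e' * BB n J w)"
  shows "I = J"
proof -
  have "BB n I (sadj i) \<noteq> 0 \<longleftrightarrow> BB n J (sadj i) \<noteq> 0" for i
    using fun_cong[OF assms(3), of "sadj i"] by auto
  then show ?thesis
    using BB_sadj_nonzero_iff[OF assms(1)] BB_sadj_nonzero_iff[OF assms(2)] by blast
qed

lemma vertex_at: "(p b, int b) \<in> vertices p"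
  by (auto simp: vertices_def)

lemma mem_vertices: "(x, y) \<in> vertices p \<longleftrightarrow> 0 \<le> y \<and> x = p (nat y)"
  unfolding vertices_def by auto

lemma lattice_path_step:
  "lattice_path p a B \<Longrightarrow> p (Suc b) = p b \<or> p (Suc b) = p b + 1"
  unfolding lattice_path_def by blast

lemma lattice_path_mono:
  assumes "lattice_path p a B" "b \<le> b'"
  shows "p b \<le> p b'"
  using assms(2)
proof (induction b' rule: dec_induct)
  case (step m)
  then show ?case using lattice_path_step[OF assms(1), of m] by auto
qed simp

lemma lattice_paths_eventually_vertical:
  assumes "finite K" "\<forall>k\<in>K. lattice_path (R k) (a k) (B k)"
  obtains N where "\<forall>k\<in>K. \<forall>b\<ge>N. R k b = a k"
proof -
  obtain f where f: "\<forall>k\<in>K. \<forall>b\<ge>f k. R k b = a k"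
    using assms(2) unfolding lattice_path_def by metis
  have "\<forall>k\<in>K. f k \<le> (\<Sum>k\<in>K. f k)" using assms(1) by (auto intro: member_le_sum)
  then show ?thesis using f that by (meson order_trans)
qed

lemma lattice_path_le:
  assumes "lattice_path p a B"
  shows "p b \<le> a"
proof -
  obtain N where N: "\<forall>b\<ge>N. p b = a" using assms unfolding lattice_path_def by blast
  have "p b \<le> p (max b N)" by (rule lattice_path_mono[OF assms]) simp
  also have "\<dots> = a" using N by simp
  finally show ?thesis .
qed

lemma Ax_less:
  assumes "is_partition lam" "1 \<le> i" "i < j"
  shows "Ax lam n j < Ax lam n i"
proof -
  have "lam j \<le> lam i" using assms unfolding is_partition_def by simp
  then show ?thesis unfolding Ax_def using assms(3) by simp
qed

lemma Bv_less:
  assumes "is_partition mu" "1 \<le> i" "i < j"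
  shows "fst (Bv mu n j) < fst (Bv mu n i)"
proof -
  have "mu j \<le> mu i" using assms unfolding is_partition_def by simp
  then show ?thesis unfolding Bv_def using assms(3) by simp
qed

lemma Bv_inj:
  assumes "is_partition mu" "i \<in> {1..n}" "j \<in> {1..n}" "Bv mu n i = Bv mu n j"
  shows "i = j"
  using assms Bv_less[OF assms(1), of i j n] Bv_less[OF assms(1), of j i n]
  by (cases i j rule: linorder_cases) auto

lemma path_family_type_unique:
  assumes "is_partition mu" "path_family lam mu n R w1" "path_family lam mu n R w2"
  shows "w1 = w2"
proof
  fix k
  have perm: "w1 permutes {1..n}" "w2 permutes {1..n}"
    using assms unfolding path_family_def by blast+
  show "w1 k = w2 k"
  proof (cases "k \<in> {1..n}")
    case True
    then have "Bv mu n (w1 k) = Bv mu n (w2 k)"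
      using assms unfolding path_family_def lattice_path_def by metis
    moreover have "w1 k \<in> {1..n}" "w2 k \<in> {1..n}"
      using True permutes_in_image[OF perm(1)] permutes_in_image[OF perm(2)] by blast+
    ultimately show ?thesis using Bv_inj[OF assms(1)] by blast
  next
    case False
    then show ?thesis using perm by (simp add: permutes_not_in)
  qed
qed

section \<open>Parities of chosen switches\<close>

definition odd_rows_from :: "nat \<Rightarrow> (nat \<times> nat) set \<Rightarrow> nat set" where
  "odd_rows_from c C = {i. odd (card {b. c \<le> b \<and> (i, b) \<in> C})}"

definition row_at :: "nat \<Rightarrow> (nat \<times> nat) set \<Rightarrow> nat set" where
  "row_at c C = {i. (i, c) \<in> C}"

lemma odd_rows_fromE:
  assumes "i \<in> odd_rows_from c C"
  obtains b where "c \<le> b" "(i, b) \<in> C"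
proof -
  have "odd (card {b. c \<le> b \<and> (i, b) \<in> C})" using assms by (simp add: odd_rows_from_def)
  then have "{b. c \<le> b \<and> (i, b) \<in> C} \<noteq> {}" by (metis card.empty odd_pos less_irrefl)
  then show ?thesis using that by blast
qed

lemma odd_rows_from_subset: "C \<subseteq> R \<Longrightarrow> odd_rows_from c C \<subseteq> fst ` R"
  by (force elim: odd_rows_fromE)

lemma odd_rows_from_above:
  assumes "\<forall>x\<in>C. snd x < c"
  shows "odd_rows_from c C = {}"
proof -
  have empty: "{b. c \<le> b \<and> (i, b) \<in> C} = {}" for i using assms by force
  show ?thesis unfolding odd_rows_from_def empty by simp
qed

lemma odd_rows_from_cong:
  assumes "\<forall>i b. c \<le> b \<longrightarrow> ((i, b) \<in> C \<longleftrightarrow> (i, b) \<in> C')"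
  shows "odd_rows_from c C = odd_rows_from c C'"
proof -
  have "{b. c \<le> b \<and> (i, b) \<in> C} = {b. c \<le> b \<and> (i, b) \<in> C'}" for i using assms by auto
  then show ?thesis by (simp add: odd_rows_from_def)
qed

lemma odd_rows_from_Suc:
  assumes "finite C"
  shows "odd_rows_from c C
    = sym_diff (odd_rows_from (Suc c) C) (row_at c C)"
proof (rule set_eqI)
  fix i
  define X where "X = {b. Suc c \<le> b \<and> (i, b) \<in> C}"
  have "finite X" unfolding X_def
    by (rule finite_subset[of _ "snd ` C"]) (use assms in force)+
  moreover have "{b. c \<le> b \<and> (i, b) \<in> C} = (if (i, c) \<in> C then insert c X else X)"
    by (auto simp: X_def Suc_le_eq le_less)
  moreover have "c \<notin> X" by (simp add: X_def)
  ultimately show "i \<in> odd_rows_from c C \<longleftrightarrow>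
      i \<in> sym_diff (odd_rows_from (Suc c) C) (row_at c C)"
    by (simp add: odd_rows_from_def row_at_def X_def[symmetric])
qed

lemma odd_rows_from_symdiff:
  assumes "finite C" "inj_on fst T" "fst ` T = X"
  shows "odd_rows_from 0 (sym_diff C T) = sym_diff (odd_rows_from 0 C) X"
proof (rule set_eqI)
  fix i
  define Y where "Y = {b. (i, b) \<in> C}"
  have fY: "finite Y" unfolding Y_def
    by (rule finite_subset[of _ "snd ` C"]) (use assms(1) in force)+
  have in_C: "i \<in> odd_rows_from 0 C \<longleftrightarrow> odd (card Y)" by (simp add: odd_rows_from_def Y_def)
  show "i \<in> odd_rows_from 0 (sym_diff C T) \<longleftrightarrow> i \<in> sym_diff (odd_rows_from 0 C) X"
  proof (cases "i \<in> X")
    case True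
    then obtain b where b: "(i, b) \<in> T" using assms(3) by force
    moreover have "b' = b" if "(i, b') \<in> T" for b'
      using inj_onD[OF assms(2) _ that b] by simp
    ultimately have "{b'. (i, b') \<in> T} = {b}" by blast
    then have row: "{b'. (i, b') \<in> sym_diff C T} = sym_diff Y {b}"
      by (auto simp: Y_def)
    have "odd (card (sym_diff Y {b})) \<longleftrightarrow> \<not> odd (card Y)"
    proof (cases "b \<in> Y")
      case True
      then have "sym_diff Y {b} = Y - {b}" "card (Y - {b}) = card Y - 1" "0 < card Y"
        using fY by (auto simp: card_gt_0_iff)
      then show ?thesis by (cases "card Y") auto
    next
      case False
      then have "sym_diff Y {b} = insert b Y" by auto
      then show ?thesis using False fY by simp
    qed
    then show ?thesis using True in_C row by (simp add: odd_rows_from_def)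
  next
    case False
    then have "{b. (i, b) \<in> sym_diff C T} = Y" using assms(3) by (force simp: Y_def)
    then show ?thesis using False in_C by (simp add: odd_rows_from_def)
  qed
qed

lemma card_odd_rows_fiber_eq:
  assumes "finite R" "S \<subseteq> fst ` R"
  shows "card {C. C \<subseteq> R \<and> odd_rows_from 0 C = S} = card {C. C \<subseteq> R \<and> odd_rows_from 0 C = {}}"
proof -
  define T where "T = (\<lambda>i. (i, SOME b. (i, b) \<in> R)) ` S"
  have "(i, SOME b. (i, b) \<in> R) \<in> R" if i: "i \<in> S" for i
  proof -
    obtain b where "(i, b) \<in> R" using assms(2) i by force
    then show ?thesis by (rule someI)
  qed
  then have TR: "T \<subseteq> R" unfolding T_def by blast
  have inj: "inj_on fst T" unfolding T_def by (rule inj_onI) auto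
  have fstT: "fst ` T = S" unfolding T_def by (simp add: image_image)
  define g where "g C = sym_diff C T" for C
  have gg: "g (g C) = C" for C unfolding g_def by auto
  have gR: "g C \<subseteq> R" if "C \<subseteq> R" for C using that TR unfolding g_def by blast
  have odd_g: "odd_rows_from 0 (g C) = sym_diff (odd_rows_from 0 C) S"
    if "C \<subseteq> R" for C
    unfolding g_def using odd_rows_from_symdiff[OF finite_subset[OF that assms(1)] inj fstT] .
  have img: "g ` {C. C \<subseteq> R \<and> odd_rows_from 0 C = {}} = {C. C \<subseteq> R \<and> odd_rows_from 0 C = S}"
  proof (intro equalityI subsetI)
    fix D assume "D \<in> g ` {C. C \<subseteq> R \<and> odd_rows_from 0 C = {}}"
    then obtain C where "C \<subseteq> R" "odd_rows_from 0 C = {}" "D = g C" by blast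
    then show "D \<in> {C. C \<subseteq> R \<and> odd_rows_from 0 C = S}" using odd_g gR by simp
  next
    fix D assume D: "D \<in> {C. C \<subseteq> R \<and> odd_rows_from 0 C = S}"
    then have "g D \<in> {C. C \<subseteq> R \<and> odd_rows_from 0 C = {}}" using odd_g gR by simp
    then show "D \<in> g ` {C. C \<subseteq> R \<and> odd_rows_from 0 C = {}}"
      by (rule rev_image_eqI) (simp add: gg)
  qed
  have "inj_on g {C. C \<subseteq> R \<and> odd_rows_from 0 C = {}}" by (rule inj_onI) (metis gg)
  then show ?thesis unfolding img[symmetric] by (rule card_image)
qed

lemma card_subsets_odd_rows:
  assumes "finite R" "S \<subseteq> fst ` R"
  shows "card {C. C \<subseteq> R \<and> odd_rows_from 0 C = S} = 2 ^ (card R - card (fst ` R))"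
proof -
  let ?fiber = "\<lambda>S. {C. C \<subseteq> R \<and> odd_rows_from 0 C = S}"
  have fin: "finite (?fiber S)" for S
    by (rule finite_subset[of _ "Pow R"]) (use assms(1) in auto)
  have "Pow R = (\<Union>S\<in>Pow (fst ` R). ?fiber S)"
  proof (intro equalityI subsetI)
    fix C assume "C \<in> Pow R"
    then show "C \<in> (\<Union>S\<in>Pow (fst ` R). ?fiber S)" using odd_rows_from_subset[of C R 0] by blast
  qed auto
  then have "2 ^ card R = card (\<Union>S\<in>Pow (fst ` R). ?fiber S)"
    using assms(1) by (metis card_Pow)
  also have "\<dots> = (\<Sum>S\<in>Pow (fst ` R). card (?fiber S))"
    by (rule card_UN_disjoint) (use assms(1) fin in auto)
  also have "\<dots> = (\<Sum>S\<in>Pow (fst ` R). card (?fiber {}))"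
    by (intro sum.cong refl card_odd_rows_fiber_eq[OF assms(1)]) auto
  also have "\<dots> = card (?fiber {}) * 2 ^ card (fst ` R)"
    using assms(1) by (simp add: card_Pow)
  finally have "card (?fiber {}) * 2 ^ card (fst ` R) = 2 ^ card R" ..
  also have "(2::nat) ^ card R = 2 ^ (card R - card (fst ` R)) * 2 ^ card (fst ` R)"
    using card_image_le[OF assms(1), of fst] by (simp add: power_add[symmetric])
  finally have "card (?fiber {}) = 2 ^ (card R - card (fst ` R))" by simp
  with card_odd_rows_fiber_eq[OF assms] show ?thesis by (rule trans)
qed

lemma card_subsets_odd_rows_image:
  assumes "finite R"
  shows "card {C. C \<subseteq> R \<and> f (odd_rows_from 0 C) = w}
    = 2 ^ (card R - card (fst ` R)) * card {S. S \<subseteq> fst ` R \<and> f S = w}"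
proof -
  define SW where "SW = {S. S \<subseteq> fst ` R \<and> f S = w}"
  have fin: "finite SW" unfolding SW_def by (rule finite_subset[of _ "Pow (fst ` R)"]) (use assms in auto)
  have "{C. C \<subseteq> R \<and> f (odd_rows_from 0 C) = w} = (\<Union>S\<in>SW. {C. C \<subseteq> R \<and> odd_rows_from 0 C = S})"
  proof (intro equalityI subsetI)
    fix C assume "C \<in> {C. C \<subseteq> R \<and> f (odd_rows_from 0 C) = w}"
    then show "C \<in> (\<Union>S\<in>SW. {C. C \<subseteq> R \<and> odd_rows_from 0 C = S})"
      using odd_rows_from_subset[of C R 0] unfolding SW_def by blast
  qed (auto simp: SW_def)
  then have "card {C. C \<subseteq> R \<and> f (odd_rows_from 0 C) = w}
      = (\<Sum>S\<in>SW. card {C. C \<subseteq> R \<and> odd_rows_from 0 C = S})"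
    by (simp only:) (rule card_UN_disjoint, use fin assms in \<open>simp_all, blast\<close>)
  also have "\<dots> = (\<Sum>S\<in>SW. 2 ^ (card R - card (fst ` R)))"
    by (intro sum.cong refl card_subsets_odd_rows[OF assms]) (simp add: SW_def)
  finally show ?thesis unfolding SW_def[symmetric] by (simp add: mult.commute)
qed

lemma edge_at_eq_iff: "edge_at p b = edge_at q b \<longleftrightarrow> p (Suc b) = q (Suc b) \<and> p b = q b"
  by (simp add: edge_at_def)

lemma edge_mult_at_level:
  assumes "snd (snd e) = int b"
  shows "edge_mult n R e = card {k \<in> {1..n}. edge_at (R k) b = e}"
proof -
  have "{(i, b'). i \<in> {1..n} \<and> edge_at (R i) b' = e} = (\<lambda>i. (i, b)) ` {k \<in> {1..n}. edge_at (R k) b = e}"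
    using assms unfolding edge_at_def by auto
  then show ?thesis unfolding edge_mult_def by (simp add: card_image inj_on_def)
qed

lemma covers_card_edge_users:
  assumes "covers n Q (edge_mult n P)"
  shows "card {k \<in> {1..n}. edge_at (Q k) b = edge_at p b} = card {k \<in> {1..n}. edge_at (P k) b = edge_at p b}"
proof -
  have level: "snd (snd (edge_at p b)) = int b" by (simp add: edge_at_def)
  have "edge_mult n P (edge_at p b) = edge_mult n Q (edge_at p b)"
    using assms unfolding covers_def by (rule spec)
  then show ?thesis unfolding edge_mult_at_level[OF level] by simp
qed

lemma covering_edge_in_family:
  assumes "covers n Q (edge_mult n P)" "k \<in> {1..n}"
  obtains j where "j \<in> {1..n}" "P j (Suc b) = Q k (Suc b)" "P j b = Q k b"
proof -
  have "0 < card {k' \<in> {1..n}. edge_at (Q k') b = edge_at (Q k) b}"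
    using assms(2) by (auto simp: card_gt_0_iff)
  then have "{j \<in> {1..n}. edge_at (P j) b = edge_at (Q k) b} \<noteq> {}"
    unfolding covers_card_edge_users[OF assms(1)] by (metis card.empty less_irrefl)
  then show ?thesis using that unfolding edge_at_eq_iff by blast
qed

lemma covering_shared_edge:
  assumes "covers n Q (edge_mult n P)" "k1 \<in> {1..n}" "k2 \<in> {1..n}" "k1 \<noteq> k2"
    and "edge_at (Q k1) b = edge_at (Q k2) b"
  obtains j1 j2 where "j1 \<in> {1..n}" "j2 \<in> {1..n}" "j1 \<noteq> j2"
    "edge_at (P j1) b = edge_at (Q k1) b" "edge_at (P j2) b = edge_at (Q k1) b"
proof -
  let ?users = "\<lambda>R. {k \<in> {1..n}. edge_at (R k) b = edge_at (Q k1) b}"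
  have "card {k1, k2} \<le> card (?users Q)" by (rule card_mono) (use assms in auto)
  then have "2 \<le> card (?users Q)" using assms(4) by simp
  then have "\<not> card (?users P) \<le> Suc 0" unfolding covers_card_edge_users[OF assms(1)] by simp
  moreover have "finite (?users P)" by simp
  ultimately have "\<exists>j1\<in>?users P. \<exists>j2\<in>?users P. j1 \<noteq> j2"
    using card_le_Suc0_iff_eq by blast
  then show ?thesis using that by blast
qed

section \<open>Noncrossing families on a skew shape without a 3x2 block\<close>

locale noncrossing_no_3x2 =
  fixes lam mu :: "nat \<Rightarrow> nat" and n :: nat and P :: "nat \<Rightarrow> lpath" and \<sigma> :: "nat \<Rightarrow> nat"
  assumes lam_partition: "is_partition lam" and mu_partition: "is_partition mu"
    and no_3x2: "\<not> has_3x2_block lam mu"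
    and family: "path_family lam mu n P \<sigma>" and noncrossing: "noncrossing_family n P"
begin

lemma P_lattice_path: "k \<in> {1..n} \<Longrightarrow> lattice_path (P k) (Ax lam n k) (Bv mu n (\<sigma> k))"
  using family unfolding path_family_def by blast

lemma type_permutes: "\<sigma> permutes {1..n}"
  using family unfolding path_family_def by blast

definition top_height :: nat where
  "top_height = (SOME N. \<forall>k\<in>{1..n}. \<forall>b\<ge>N. P k b = Ax lam n k)"

lemma P_top:
  assumes "k \<in> {1..n}" "top_height \<le> b"
  shows "P k b = Ax lam n k"
proof -
  obtain N where "\<forall>k\<in>{1..n}. \<forall>b\<ge>N. P k b = Ax lam n k"
    by (rule lattice_paths_eventually_vertical[of "{1..n}" P "Ax lam n" "\<lambda>k. Bv mu n (\<sigma> k)"])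
      (use P_lattice_path in auto)
  then have "\<forall>k\<in>{1..n}. \<forall>b\<ge>top_height. P k b = Ax lam n k"
    unfolding top_height_def by (rule someI)
  then show ?thesis using assms by blast
qed

lemma P_antimono:
  assumes "i \<in> {1..n}" "j \<in> {1..n}" "i < j"
  shows "P j b \<le> P i b"
proof (rule ccontr)
  assume "\<not> P j b \<le> P i b"
  then have "P i b < P j b" by simp
  moreover have "P j top_height < P i top_height"
    using P_top assms Ax_less[OF lam_partition] by simp
  moreover have "noncrossing_paths (P i) (P j)"
    using noncrossing assms unfolding noncrossing_family_def by blast
  ultimately show False
    using vertex_at[of "P i"] vertex_at[of "P j"] unfolding noncrossing_paths_def by blast
qed

lemma type_eq_id: "\<sigma> = id"
proof (rule permutes_strict_mono_id[OF type_permutes])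
  fix i j assume ij: "1 \<le> i" "i < j" "j \<le> n"
  then have "\<sigma> i \<in> {1..n}" "\<sigma> j \<in> {1..n}" "\<sigma> i \<noteq> \<sigma> j"
    using permutes_in_image[OF type_permutes] permutes_inj[OF type_permutes]
    by (auto dest: injD)
  moreover have "fst (Bv mu n (\<sigma> j)) \<le> fst (Bv mu n (\<sigma> i))"
    using P_antimono[of i j 0] ij P_lattice_path[of i] P_lattice_path[of j]
    unfolding lattice_path_def by (auto simp: prod_eq_iff)
  ultimately show "\<sigma> i < \<sigma> j"
    using Bv_less[OF mu_partition, of "\<sigma> j" "\<sigma> i" n] by (cases "\<sigma> j < \<sigma> i") auto
qed

lemma P_0: "k \<in> {1..n} \<Longrightarrow> P k 0 = fst (Bv mu n k)"
  using P_lattice_path type_eq_id unfolding lattice_path_def by (metis fst_conv id_apply)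

lemma P_step: "k \<in> {1..n} \<Longrightarrow> P k (Suc b) = P k b \<or> P k (Suc b) = P k b + 1"
  using lattice_path_step[OF P_lattice_path] .

lemma P_mono: "k \<in> {1..n} \<Longrightarrow> b \<le> b' \<Longrightarrow> P k b \<le> P k b'"
  using lattice_path_mono[OF P_lattice_path] .

lemma P_lower: "k \<in> {1..n} \<Longrightarrow> fst (Bv mu n k) \<le> P k b"
  using P_mono[of k 0 b] P_0 by simp

lemma P_upper: "k \<in> {1..n} \<Longrightarrow> P k b \<le> Ax lam n k"
  using lattice_path_le[OF P_lattice_path] .

text \<open>This is the only place where the missing 3x2 block enters: the top end of path i+2 lies
  to the left of the bottom end of path i, so paths two apart never meet.\<close>

lemma P_two_apart_less:
  assumes "1 \<le> i" "i + 2 \<le> k" "k \<le> n"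
  shows "P k h' < P i h"
proof -
  have "lam k \<le> lam (i + 2)" using lam_partition assms unfolding is_partition_def by simp
  moreover have "lam (i + 2) < mu i + 2" using no_3x2 assms unfolding has_3x2_block_def by force
  ultimately have "Ax lam n k < fst (Bv mu n i)" unfolding Ax_def Bv_def using assms by simp
  then show ?thesis using P_upper[of k h'] P_lower[of i h] assms by fastforce
qed

definition touch :: "nat \<Rightarrow> nat \<Rightarrow> bool" where
  "touch i b \<longleftrightarrow> P i b = P (Suc i) b"

definition diverge :: "nat \<Rightarrow> nat \<Rightarrow> bool" where
  "diverge i b \<longleftrightarrow> touch i (Suc b) \<and> \<not> touch i b"

lemma no_touch_triple: "1 \<le> i \<Longrightarrow> i + 2 \<le> n \<Longrightarrow> touch i b \<Longrightarrow> touch (Suc i) b \<Longrightarrow> False"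
  using P_two_apart_less[of i "i + 2" b b] unfolding touch_def by simp

lemma touch_Suc_below:
  assumes "1 \<le> i" "i + 2 \<le> n" "touch i h" "touch (Suc i) h'"
  shows "h' < h"
proof (rule ccontr)
  assume "\<not> h' < h"
  then have "P (Suc i) h \<le> P (Suc i) h'" using P_mono[of "Suc i" h h'] assms by simp
  then have "P i h \<le> P (i + 2) h'" using assms unfolding touch_def by simp
  then show False using P_two_apart_less[of i "i + 2" h' h] assms by simp
qed

lemma touch_pos: "1 \<le> i \<Longrightarrow> i < n \<Longrightarrow> touch i b \<Longrightarrow> 0 < b"
  using P_0[of i] P_0[of "Suc i"] Bv_less[OF mu_partition, of i "Suc i" n] unfolding touch_def
  by (cases b) auto

lemma touch_below_top: "1 \<le> i \<Longrightarrow> i < n \<Longrightarrow> touch i b \<Longrightarrow> b < top_height"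
  using P_top[of i b] P_top[of "Suc i" b] Ax_less[OF lam_partition, of i "Suc i" n]
  unfolding touch_def by (cases "top_height \<le> b") auto

lemma P_eq_cases:
  assumes "j \<in> {1..n}" "j' \<in> {1..n}" "P j' b = P j b"
  shows "j' = j \<or> (j' = Suc j \<and> touch j b) \<or> (Suc j' = j \<and> touch j' b)"
proof -
  have "\<not> j + 2 \<le> j'" "\<not> j' + 2 \<le> j"
    using P_two_apart_less[of j j' b b] P_two_apart_less[of j' j b b] assms by auto
  then consider "j' = j" | "j' = Suc j" | "Suc j' = j" by linarith
  then show ?thesis using assms unfolding touch_def by cases auto
qed

definition divergences :: "(nat \<times> nat) set" where
  "divergences = {(i, b). 1 \<le> i \<and> i < n \<and> diverge i b}"

definition touching_pairs :: "nat set" where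
  "touching_pairs = fst ` divergences"

lemma divergences_subset: "divergences \<subseteq> {1..<n} \<times> {..<top_height}"
  using touch_below_top unfolding divergences_def diverge_def by fastforce

lemma finite_divergences: "finite divergences"
  using divergences_subset by (rule finite_subset) simp

lemma touching_pairs_subset: "touching_pairs \<subseteq> {1..<n}"
  using divergences_subset unfolding touching_pairs_def by force

lemma paths_intersect_iff_touching:
  assumes "1 \<le> i" "i < n"
  shows "paths_intersect (P i) (P (Suc i)) \<longleftrightarrow> i \<in> touching_pairs"
proof -
  have "paths_intersect (P i) (P (Suc i)) \<longleftrightarrow> (\<exists>b. touch i b)"
    unfolding paths_intersect_def vertices_def touch_def by auto
  also have "\<dots> \<longleftrightarrow> (\<exists>b. diverge i b)"
  proof
    assume "\<exists>b. touch i b"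
    then have first: "touch i (LEAST b. touch i b)" by (rule LeastI_ex)
    then obtain b where b: "(LEAST b. touch i b) = Suc b"
      using touch_pos[OF assms] gr0_implies_Suc by metis
    then have "\<not> touch i b" using not_less_Least[of b "touch i"] by simp
    then show "\<exists>b. diverge i b" using first b unfolding diverge_def by auto
  qed (auto simp: diverge_def)
  also have "\<dots> \<longleftrightarrow> i \<in> touching_pairs"
    unfolding touching_pairs_def divergences_def using assms by force
  finally show ?thesis .
qed

text \<open>A set C of divergence points describes the family obtained from P by exchanging the two
  tails of P_i and P_(i+1) below each chosen divergence point (i, b); the path entering at k
  follows P_(switch_perm C b k) at height b.\<close>

definition switch_perm :: "(nat \<times> nat) set \<Rightarrow> nat \<Rightarrow> nat \<Rightarrow> nat" where
  "switch_perm C b = sadj_prod (odd_rows_from b C)"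

definition switched :: "(nat \<times> nat) set \<Rightarrow> nat \<Rightarrow> lpath" where
  "switched C k b = (if k \<in> {1..n} then P (switch_perm C b k) b else 0)"

lemma odd_rows_from_divergences: "C \<subseteq> divergences \<Longrightarrow> odd_rows_from c C \<subseteq> {1..<n}"
  using odd_rows_from_subset[of C divergences c] touching_pairs_subset
  unfolding touching_pairs_def by blast

lemma switch_perm_permutes:
  assumes "C \<subseteq> divergences"
  shows "switch_perm C c permutes {1..n}"
proof -
  have "odd_rows_from c C \<subseteq> {1..<n}" by (rule odd_rows_from_divergences[OF assms])
  then show ?thesis unfolding switch_perm_def by (intro sadj_prod_permutes) (auto intro: finite_subset)
qed

lemma switch_perm_in: "C \<subseteq> divergences \<Longrightarrow> k \<in> {1..n} \<Longrightarrow> switch_perm C c k \<in> {1..n}"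
  using permutes_in_image[OF switch_perm_permutes] by blast

lemma switch_perm_top: "C \<subseteq> divergences \<Longrightarrow> top_height \<le> c \<Longrightarrow> switch_perm C c = id"
  unfolding switch_perm_def
  by (subst odd_rows_from_above) (use divergences_subset in force)+

lemma switch_perm_Suc:
  assumes C: "C \<subseteq> divergences"
  shows "switch_perm C c = swap_pairs (row_at c C) \<circ> switch_perm C (Suc c)"
proof -
  have fC: "finite C" using C finite_divergences finite_subset by blast
  have fD: "finite (row_at c C)"
    by (rule finite_subset[of _ "fst ` C"]) (use fC in \<open>force simp: row_at_def\<close>)+
  have row: "1 \<le> x" "x < n" "diverge x c" if "x \<in> row_at c C" for x
    using C that unfolding row_at_def divergences_def by auto
  have "\<forall>x\<in>row_at c C. Suc x \<notin> row_at c C"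
  proof (intro ballI notI)
    fix x assume "x \<in> row_at c C" "Suc x \<in> row_at c C"
    then show False using row no_touch_triple[of x "Suc c"] unfolding diverge_def by fastforce
  qed
  moreover have "\<forall>x\<in>row_at c C. Suc x \<notin> odd_rows_from (Suc c) C"
  proof (intro ballI notI)
    fix x assume x: "x \<in> row_at c C" "Suc x \<in> odd_rows_from (Suc c) C"
    obtain b where b: "Suc c \<le> b" "(Suc x, b) \<in> C" using x(2) by (rule odd_rows_fromE)
    then have "diverge (Suc x) b" "Suc x < n" using C unfolding divergences_def by auto
    then show False using row[OF x(1)] touch_Suc_below[of x "Suc c" "Suc b"] b(1)
      unfolding diverge_def by auto
  qed
  moreover have "0 \<notin> row_at c C" using row by fastforce
  moreover have "finite (odd_rows_from (Suc c) C)"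
    using finite_subset[OF odd_rows_from_divergences[OF C]] by blast
  ultimately show ?thesis
    unfolding switch_perm_def odd_rows_from_Suc[OF fC, of c]
    using sadj_prod_symdiff[OF fD] by (simp add: Int_absorb)
qed

text \<open>Swaps made at height c exchange paths that meet at height c + 1.\<close>

lemma P_switch_perm_Suc:
  assumes C: "C \<subseteq> divergences" and k: "k \<in> {1..n}"
  shows "P (switch_perm C c k) (Suc c) = P (switch_perm C (Suc c) k) (Suc c)"
proof -
  define j where "j = switch_perm C (Suc c) k"
  have touch_row: "touch i (Suc c)" if "i \<in> row_at c C" for i
    using C that unfolding row_at_def divergences_def diverge_def by auto
  have "switch_perm C c k = swap_pairs (row_at c C) j"
    using switch_perm_Suc[OF C, of c] unfolding j_def by simp
  moreover have "P (swap_pairs (row_at c C) j) (Suc c) = P j (Suc c)"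
    using touch_row[of j] touch_row[of "j - 1"] unfolding swap_pairs_def touch_def
    by (auto simp: Suc_pred)
  ultimately show ?thesis unfolding j_def by simp
qed

lemma switched_Suc:
  assumes "C \<subseteq> divergences" "k \<in> {1..n}"
  shows "switched C k (Suc b) = P (switch_perm C b k) (Suc b)"
  unfolding switched_def using P_switch_perm_Suc[OF assms, of b] assms by simp

lemma edge_at_switched:
  assumes "C \<subseteq> divergences" "k \<in> {1..n}"
  shows "edge_at (switched C k) b = edge_at (P (switch_perm C b k)) b"
  unfolding edge_at_def using switched_Suc[OF assms] assms unfolding switched_def by simp

lemma switched_path_family:
  assumes C: "C \<subseteq> divergences"
  shows "path_family lam mu n (switched C) (switch_perm C 0)"
  unfolding path_family_def
proof (intro conjI ballI allI impI)
  show "switch_perm C 0 permutes {1..n}" by (rule switch_perm_permutes[OF C])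
next
  fix i assume i: "i \<in> {1..n}"
  show "lattice_path (switched C i) (Ax lam n i) (Bv mu n (switch_perm C 0 i))"
    unfolding lattice_path_def
  proof (intro conjI allI)
    show "(switched C i 0, 0) = Bv mu n (switch_perm C 0 i)"
      using P_0[OF switch_perm_in[OF C i]] i unfolding switched_def Bv_def by simp
  next
    fix b
    show "switched C i (Suc b) = switched C i b \<or> switched C i (Suc b) = switched C i b + 1"
      using switched_Suc[OF C i, of b] P_step[OF switch_perm_in[OF C i], of b] i
      unfolding switched_def by simp
  next
    show "\<exists>N. \<forall>b\<ge>N. switched C i b = Ax lam n i"
      using switch_perm_top[OF C] P_top[OF i] i unfolding switched_def
      by (intro exI[of _ top_height]) auto
  qed
next
  fix i assume "i \<notin> {1..n}"
  then show "switched C i = (\<lambda>_. 0)" by (auto simp: switched_def)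
qed

lemma switched_covers:
  assumes C: "C \<subseteq> divergences"
  shows "covers n (switched C) (edge_mult n P)"
  unfolding covers_def edge_mult_def
proof
  fix e
  define f where "f = (\<lambda>(i::nat, b::nat). (switch_perm C b i, b))"
  let ?Q = "{(i, b). i \<in> {1..n} \<and> edge_at (switched C i) b = e}"
  let ?P = "{(i, b). i \<in> {1..n} \<and> edge_at (P i) b = e}"
  have inj: "inj_on f ?Q"
  proof (rule inj_onI)
    fix x y assume "x \<in> ?Q" "y \<in> ?Q" "f x = f y"
    then show "x = y" using permutes_inj[OF switch_perm_permutes[OF C]] unfolding f_def
      by (auto simp: inj_eq split: prod.splits)
  qed
  have img: "f ` ?Q = ?P"
  proof (intro equalityI subsetI)
    fix y assume "y \<in> f ` ?Q"
    then show "y \<in> ?P" using edge_at_switched[OF C] switch_perm_in[OF C] unfolding f_def by auto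
  next
    fix y assume "y \<in> ?P"
    then obtain j b where jb: "y = (j, b)" "j \<in> {1..n}" "edge_at (P j) b = e" by auto
    define i where "i = inv (switch_perm C b) j"
    have i: "i \<in> {1..n}" "switch_perm C b i = j"
      using permutes_in_image[OF permutes_inv[OF switch_perm_permutes[OF C]]] jb(2)
        permutes_inverses(1)[OF switch_perm_permutes[OF C]] unfolding i_def by blast+
    then have "(i, b) \<in> ?Q" using jb edge_at_switched[OF C i(1)] by simp
    then show "y \<in> f ` ?Q" using i jb unfolding f_def by force
  qed
  show "card ?P = card ?Q" using card_image[OF inj] img by simp
qed

lemma P_shared_edge:
  assumes "j \<in> {1..n}" "j' \<in> {1..n}" "j' \<noteq> j" "edge_at (P j') b = edge_at (P j) b"
  shows "(j' = Suc j \<and> touch j b \<and> touch j (Suc b)) \<or> (Suc j' = j \<and> touch j' b \<and> touch j' (Suc b))"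
  using P_eq_cases[OF assms(1,2), of b] P_eq_cases[OF assms(1,2), of "Suc b"] assms(3,4)
  unfolding edge_at_eq_iff by auto

lemma divergence_edge_unshared:
  assumes "1 \<le> i" "i < n" "diverge i b" "j \<in> {i, Suc i}" "j' \<in> {1..n}" "j' \<noteq> j"
  shows "edge_at (P j') b \<noteq> edge_at (P j) b"
proof
  assume "edge_at (P j') b = edge_at (P j) b"
  moreover have "j \<in> {1..n}" using assms by auto
  ultimately have "(j' = Suc j \<and> touch j b \<and> touch j (Suc b)) \<or> (Suc j' = j \<and> touch j' b \<and> touch j' (Suc b))"
    using P_shared_edge assms(5,6) by blast
  then show False
    using assms no_touch_triple[of "j'" "Suc b"] no_touch_triple[of i "Suc b"]
    unfolding diverge_def by auto
qed

lemma covering_divergence_edge_once: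
  assumes Qc: "covers n Q (edge_mult n P)"
    and "1 \<le> i" "i < n" "diverge i b" "j \<in> {i, Suc i}" "k1 \<in> {1..n}" "k2 \<in> {1..n}"
    and "edge_at (Q k1) b = edge_at (P j) b" "edge_at (Q k2) b = edge_at (P j) b"
  shows "k1 = k2"
proof (rule ccontr)
  assume "k1 \<noteq> k2"
  then obtain j1 j2 where "j1 \<in> {1..n}" "j2 \<in> {1..n}" "j1 \<noteq> j2"
    "edge_at (P j1) b = edge_at (P j) b" "edge_at (P j2) b = edge_at (P j) b"
    using covering_shared_edge[OF Qc assms(6,7)] assms(8,9) by metis
  then show False using divergence_edge_unshared[OF assms(2-5)] by metis
qed

lemma covering_step_cases:
  assumes Qc: "covers n Q (edge_mult n P)"
    and "k \<in> {1..n}" "j \<in> {1..n}" "Q k (Suc b) = P j (Suc b)"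
  shows "Q k b = P j b \<or> (j < n \<and> touch j (Suc b) \<and> Q k b = P (Suc j) b)
    \<or> (\<exists>i. Suc i = j \<and> 1 \<le> i \<and> touch i (Suc b) \<and> Q k b = P i b)"
proof -
  obtain j' where "j' \<in> {1..n}" "P j' (Suc b) = Q k (Suc b)" "P j' b = Q k b"
    using covering_edge_in_family[OF Qc assms(2)] .
  then show ?thesis using P_eq_cases[OF assms(3), of j' "Suc b"] assms(4) by auto
qed

context
  fixes Q :: "nat \<Rightarrow> lpath" and \<pi> :: "nat \<Rightarrow> nat" and b :: nat
  assumes Qc: "covers n Q (edge_mult n P)" and \<pi>: "\<pi> permutes {1..n}"
    and above: "\<forall>k\<in>{1..n}. Q k (Suc b) = P (\<pi> k) (Suc b)"
begin

lemma inv_in_range: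
  assumes "i \<in> {1..n}"
  shows "inv \<pi> i \<in> {1..n}" "\<pi> (inv \<pi> i) = i"
  using permutes_in_image[OF permutes_inv[OF \<pi>]] assms permutes_inverses(1)[OF \<pi>] by blast+

lemma covering_inv_Suc: "i \<in> {1..n} \<Longrightarrow> Q (inv \<pi> i) (Suc b) = P i (Suc b)"
  using above inv_in_range by metis

lemma covering_inv_cases:
  assumes "i \<in> {1..n}"
  shows "Q (inv \<pi> i) b = P i b \<or> (i < n \<and> touch i (Suc b) \<and> Q (inv \<pi> i) b = P (Suc i) b)
    \<or> (\<exists>i'. Suc i' = i \<and> 1 \<le> i' \<and> touch i' (Suc b) \<and> Q (inv \<pi> i) b = P i' b)"
  using covering_step_cases[OF Qc inv_in_range(1)[OF assms] assms covering_inv_Suc[OF assms]] .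

lemma covering_unswapped:
  assumes "1 \<le> i" "i < n" "diverge i b" "Q (inv \<pi> i) b \<noteq> P (Suc i) b"
  shows "Q (inv \<pi> i) b = P i b"
  using covering_inv_cases[of i] assms no_touch_triple[of "i - 1" "Suc b"]
  unfolding diverge_def by fastforce

lemma covering_swapped_partner:
  assumes i: "1 \<le> i" "i < n" "diverge i b" and swapped: "Q (inv \<pi> i) b = P (Suc i) b"
  shows "Q (inv \<pi> (Suc i)) b = P i b"
proof -
  have touch: "touch i (Suc b)" using i unfolding diverge_def by simp
  consider "Q (inv \<pi> (Suc i)) b = P (Suc i) b" | "Suc i < n" "touch (Suc i) (Suc b)"
    | "Q (inv \<pi> (Suc i)) b = P i b"
    using covering_inv_cases[of "Suc i"] i by auto
  then show ?thesis
  proof cases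
    case 1
    have "edge_at (Q (inv \<pi> i)) b = edge_at (P (Suc i)) b"
      "edge_at (Q (inv \<pi> (Suc i))) b = edge_at (P (Suc i)) b"
      using covering_inv_Suc[of i] covering_inv_Suc[of "Suc i"] swapped 1 i touch
      unfolding edge_at_eq_iff touch_def by auto
    then have "inv \<pi> (Suc i) = inv \<pi> i"
      using covering_divergence_edge_once[OF Qc i, of "Suc i"] inv_in_range(1)[of i] inv_in_range(1)[of "Suc i"] i
      by simp
    then have "\<pi> (inv \<pi> (Suc i)) = \<pi> (inv \<pi> i)" by simp
    then have "Suc i = i" using inv_in_range(2)[of i] inv_in_range(2)[of "Suc i"] i by simp
    then show ?thesis by simp
  next
    case 2
    then show ?thesis using no_touch_triple[of i "Suc b"] i touch by auto
  qed
qed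

text \<open>Knowing which P-path each Q-path follows at height b + 1 determines the same at height b,
  up to the choice, at each divergence point at height b, whether the two paths through it
  are exchanged; D records the exchanged ones.\<close>

lemma covering_level_step:
  assumes k: "k \<in> {1..n}"
  defines "D \<equiv> {i. 1 \<le> i \<and> i < n \<and> diverge i b \<and> Q (inv \<pi> i) b = P (Suc i) b}"
  shows "Q k b = P (swap_pairs D (\<pi> k)) b"
proof -
  define j where "j = \<pi> k"
  have j: "j \<in> {1..n}" "inv \<pi> j = k" "Q k (Suc b) = P j (Suc b)"
    using permutes_in_image[OF \<pi>] permutes_inverses(2)[OF \<pi>] above k unfolding j_def by auto
  consider "j \<in> D" | i where "j = Suc i" "i \<in> D" | "j \<notin> D" "\<forall>i. j = Suc i \<longrightarrow> i \<notin> D" by blast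
  then have "Q k b = P (swap_pairs D j) b"
  proof cases
    case 1
    then show ?thesis using j unfolding D_def swap_pairs_def by simp
  next
    case (2 i)
    then have "j \<notin> D" unfolding D_def diverge_def using no_touch_triple[of i "Suc b"] by auto
    then show ?thesis using 2 covering_swapped_partner[of i] j unfolding swap_pairs_def D_def by simp
  next
    case 3
    then have sw: "swap_pairs D j = j" unfolding swap_pairs_def by (cases j) auto
    consider "Q k b = P j b" | "j < n" "touch j (Suc b)" "Q k b = P (Suc j) b"
      | i where "Suc i = j" "1 \<le> i" "touch i (Suc b)" "Q k b = P i b"
      using covering_step_cases[OF Qc k j(1,3)] by blast
    then show ?thesis
    proof cases
      case 2
      then show ?thesis using 3 j sw unfolding D_def diverge_def touch_def by force
    next
      case (3 i)
      show ?thesis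
      proof (cases "touch i b")
        case False
        then have div: "1 \<le> i" "i < n" "diverge i b" "Q (inv \<pi> i) b \<noteq> P (Suc i) b"
          using 3 \<open>j \<notin> D\<close> j(1) \<open>\<forall>i. j = Suc i \<longrightarrow> i \<notin> D\<close> unfolding diverge_def D_def by auto
        have "edge_at (Q k) b = edge_at (P i) b" "edge_at (Q (inv \<pi> i)) b = edge_at (P i) b"
          using 3 j(3) covering_unswapped[OF div] covering_inv_Suc[of i] div
          unfolding edge_at_eq_iff touch_def by auto
        then have "k = inv \<pi> i"
          using covering_divergence_edge_once[OF Qc div(1-3), of i] k inv_in_range[of i] div by simp
        then have "\<pi> k = i" using inv_in_range[of i] div by auto
        then show ?thesis using \<open>Suc i = j\<close> unfolding j_def by simp
      qed (use 3 sw in \<open>simp add: touch_def\<close>)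
    qed (use sw in simp)
  qed
  then show ?thesis unfolding j_def .
qed

end

lemma covering_extend_switches:
  assumes Qc: "covers n Q (edge_mult n P)"
    and C: "C \<subseteq> divergences" "\<forall>x\<in>C. Suc b \<le> snd x"
    and agree: "\<forall>k\<in>{1..n}. \<forall>c\<ge>Suc b. Q k c = P (switch_perm C c k) c"
  obtains C' where "C' \<subseteq> divergences" "\<forall>x\<in>C'. b \<le> snd x"
    "\<forall>k\<in>{1..n}. \<forall>c\<ge>b. Q k c = P (switch_perm C' c k) c"
proof -
  define \<pi> where "\<pi> = switch_perm C (Suc b)"
  define D where "D = {i. 1 \<le> i \<and> i < n \<and> diverge i b \<and> Q (inv \<pi> i) b = P (Suc i) b}"
  define C' where "C' = C \<union> (\<lambda>i. (i, b)) ` D"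
  have C'_div: "C' \<subseteq> divergences" using C(1) unfolding C'_def D_def divergences_def by auto
  have above: "switch_perm C' c = switch_perm C c" if "Suc b \<le> c" for c
    unfolding switch_perm_def by (rule arg_cong[of _ _ sadj_prod], rule odd_rows_from_cong)
      (use that in \<open>auto simp: C'_def\<close>)
  have "row_at b C' = D" using C(2) unfolding row_at_def C'_def by force
  then have at_b: "switch_perm C' b = swap_pairs D \<circ> \<pi>"
    using switch_perm_Suc[OF C'_div, of b] above[of "Suc b"] unfolding \<pi>_def by simp
  have "Q k c = P (switch_perm C' c k) c" if k: "k \<in> {1..n}" and c: "b \<le> c" for k c
  proof (cases "c = b")
    case True
    have "Q k b = P (swap_pairs D (\<pi> k)) b"
      unfolding D_def using covering_level_step[OF Qc switch_perm_permutes[OF C(1)] _ k] agree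
      unfolding \<pi>_def by simp
    then show ?thesis using True at_b by simp
  next
    case False
    then show ?thesis using agree k c above by simp
  qed
  moreover have "\<forall>x\<in>C'. b \<le> snd x" using C(2) unfolding C'_def by auto
  ultimately show ?thesis using that C'_div by blast
qed

lemma covering_family_switched:
  assumes Qf: "path_family lam mu n Q \<tau>" and Qc: "covers n Q (edge_mult n P)"
  obtains C where "C \<subseteq> divergences" "Q = switched C"
proof -
  obtain N where N: "\<forall>k\<in>{1..n}. \<forall>c\<ge>N. Q k c = Ax lam n k"
    by (rule lattice_paths_eventually_vertical[of "{1..n}" Q "Ax lam n" "\<lambda>k. Bv mu n (\<tau> k)"])
      (use Qf in \<open>auto simp: path_family_def\<close>)
  define M where "M = max N top_height"
  have "\<exists>C. C \<subseteq> divergences \<and> (\<forall>x\<in>C. b \<le> snd x) \<and> (\<forall>k\<in>{1..n}. \<forall>c\<ge>b. Q k c = P (switch_perm C c k) c)"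
    if "b \<le> M" for b
    using that
  proof (induction b rule: inc_induct)
    case base
    have "\<forall>k\<in>{1..n}. \<forall>c\<ge>M. Q k c = P (switch_perm {} c k) c"
      using N P_top switch_perm_top[of "{}"] unfolding M_def by simp
    then show ?case by blast
  next
    case (step b)
    then show ?case using covering_extend_switches[OF Qc] by metis
  qed
  from this[of 0] obtain C where C: "C \<subseteq> divergences" "\<forall>k\<in>{1..n}. \<forall>c. Q k c = P (switch_perm C c k) c"
    by auto
  have "Q = switched C"
    using C(2) Qf unfolding switched_def path_family_def by (auto simp: fun_eq_iff)
  then show ?thesis using that C(1) by blast
qed

lemma switched_differ:
  assumes C: "C \<subseteq> divergences" and C': "C' \<subseteq> divergences"
    and same_above: "odd_rows_from (Suc b) C = odd_rows_from (Suc b) C'"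
    and "(i, b) \<in> C" "(i, b) \<notin> C'"
  shows "switched C \<noteq> switched C'"
proof
  assume eq: "switched C = switched C'"
  define \<pi> where "\<pi> = switch_perm C (Suc b)"
  have i: "1 \<le> i" "i < n" "diverge i b" using assms(4) C unfolding divergences_def by auto
  define k where "k = inv \<pi> i"
  have k: "k \<in> {1..n}" "\<pi> k = i"
    using permutes_in_image[OF permutes_inv[OF switch_perm_permutes[OF C]]]
      permutes_inverses(1)[OF switch_perm_permutes[OF C]] i
    unfolding k_def \<pi>_def by auto
  have "switch_perm C b k = swap_pairs (row_at b C) i"
    using switch_perm_Suc[OF C, of b] k unfolding \<pi>_def by simp
  also have "\<dots> = Suc i" using assms(4) unfolding swap_pairs_def row_at_def by simp
  finally have "switched C k b = P (Suc i) b" using k unfolding switched_def by simp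
  moreover have "switch_perm C' b k = swap_pairs (row_at b C') i"
    using switch_perm_Suc[OF C', of b] k same_above unfolding \<pi>_def switch_perm_def by simp
  moreover have "i - 1 \<notin> row_at b C'" if "0 < i"
    using that C' i no_touch_triple[of "i - 1" "Suc b"]
    unfolding row_at_def divergences_def diverge_def by auto
  then have "swap_pairs (row_at b C') i = i" using assms(5) unfolding swap_pairs_def row_at_def by auto
  ultimately have "switched C' k b = P i b" "switched C k b = P (Suc i) b" using k unfolding switched_def by simp_all
  then show False using eq i unfolding diverge_def touch_def by auto
qed

text \<open>Two different choices are told apart at the highest height where they differ.\<close>

lemma switched_inj:
  assumes C: "C \<subseteq> divergences" and C': "C' \<subseteq> divergences" and eq: "switched C = switched C'"
  shows "C = C'"
proof (rule ccontr)
  assume "C \<noteq> C'"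
  then have ne: "sym_diff C C' \<noteq> {}" by blast
  have fin: "finite (sym_diff C C')" using C C' finite_divergences finite_subset by blast
  define b where "b = Max (snd ` sym_diff C C')"
  have "b \<in> snd ` sym_diff C C'" unfolding b_def using fin ne by (intro Max_in) auto
  then obtain i where x: "(i, b) \<in> sym_diff C C'" by force
  have "(i', b') \<notin> sym_diff C C'" if "Suc b \<le> b'" for i' b'
  proof
    assume "(i', b') \<in> sym_diff C C'"
    then have "b' \<le> b" unfolding b_def using fin by (intro Max_ge) force+
    then show False using that by simp
  qed
  then have "\<forall>i b'. Suc b \<le> b' \<longrightarrow> ((i, b') \<in> C \<longleftrightarrow> (i, b') \<in> C')" by blast
  then have same: "odd_rows_from (Suc b) C = odd_rows_from (Suc b) C'" by (rule odd_rows_from_cong)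
  show False
  proof (cases "(i, b) \<in> C")
    case True
    then have "(i, b) \<notin> C'" using x by blast
    then show False using switched_differ[OF C C' same True] eq by simp
  next
    case False
    then have "(i, b) \<in> C'" using x by blast
    then show False using switched_differ[OF C' C same[symmetric] _ False] eq by simp
  qed
qed

lemma beta_eq_card_switches:
  "beta lam mu n (edge_mult n P) w = of_nat (card {C. C \<subseteq> divergences \<and> switch_perm C 0 = w})"
proof -
  have "{Q. path_family lam mu n Q w \<and> covers n Q (edge_mult n P)}
      = switched ` {C. C \<subseteq> divergences \<and> switch_perm C 0 = w}"
  proof (intro equalityI subsetI)
    fix Q assume "Q \<in> {Q. path_family lam mu n Q w \<and> covers n Q (edge_mult n P)}"
    then have Qf: "path_family lam mu n Q w" and Qc: "covers n Q (edge_mult n P)" by auto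
    obtain C where C: "C \<subseteq> divergences" "Q = switched C"
      using covering_family_switched[OF Qf Qc] .
    then have "switch_perm C 0 = w"
      using path_family_type_unique[OF mu_partition switched_path_family[OF C(1)]] Qf by simp
    then show "Q \<in> switched ` {C. C \<subseteq> divergences \<and> switch_perm C 0 = w}" using C by blast
  next
    fix Q assume "Q \<in> switched ` {C. C \<subseteq> divergences \<and> switch_perm C 0 = w}"
    then show "Q \<in> {Q. path_family lam mu n Q w \<and> covers n Q (edge_mult n P)}"
      using switched_path_family switched_covers by auto
  qed
  moreover have "inj_on switched {C. C \<subseteq> divergences \<and> switch_perm C 0 = w}"
    by (intro inj_onI) (use switched_inj in blast)
  ultimately show ?thesis unfolding beta_def by (simp add: card_image)
qed

lemma beta_eq_scaled_BB:
  "beta lam mu n (edge_mult n P)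
     = (\<lambda>w. (2::complex) powi int (card divergences - card touching_pairs) * BB n touching_pairs w)"
proof
  fix w
  have "card {C. C \<subseteq> divergences \<and> sadj_prod (odd_rows_from 0 C) = w}
      = 2 ^ (card divergences - card touching_pairs) * card {S. S \<subseteq> touching_pairs \<and> sadj_prod S = w}"
    using card_subsets_odd_rows_image[OF finite_divergences] unfolding touching_pairs_def .
  moreover have "BB n touching_pairs w = of_nat (card {S. S \<subseteq> touching_pairs \<and> sadj_prod S = w})"
    by (rule BB_eq_card[OF touching_pairs_subset])
  ultimately show "beta lam mu n (edge_mult n P) w
      = (2::complex) powi int (card divergences - card touching_pairs) * BB n touching_pairs w"
    unfolding beta_eq_card_switches switch_perm_def by simp
qed

lemma P_no_three_equal:
  assumes "a \<in> {1..n}" "b \<in> {1..n}" "c \<in> {1..n}" "a \<noteq> b" "b \<noteq> c" "a \<noteq> c"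
    and "P a h = P b h" "P b h = P c h"
  shows False
  using P_eq_cases[of a b h] P_eq_cases[of b c h] P_eq_cases[of a c h] assms by auto

lemma gen_wiring_diagram: "gen_wiring_diagram lam mu n (edge_mult n P)"
  unfolding gen_wiring_diagram_def
proof (intro allI impI notI)
  fix Q \<tau> assume "path_family lam mu n Q \<tau> \<and> covers n Q (edge_mult n P)"
  then obtain C where C: "C \<subseteq> divergences" "Q = switched C"
    using covering_family_switched by blast
  assume "\<exists>v i j k. i \<in> {1..n} \<and> j \<in> {1..n} \<and> k \<in> {1..n} \<and> i \<noteq> j \<and> j \<noteq> k \<and> i \<noteq> k
          \<and> v \<in> vertices (Q i) \<and> v \<in> vertices (Q j) \<and> v \<in> vertices (Q k)"
  then obtain h i j k where ijk: "i \<in> {1..n}" "j \<in> {1..n}" "k \<in> {1..n}" "i \<noteq> j" "j \<noteq> k" "i \<noteq> k"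
    and eq: "Q i h = Q j h" "Q j h = Q k h"
    unfolding vertices_def by auto
  define \<pi> where "\<pi> = switch_perm C h"
  have \<pi>: "\<pi> permutes {1..n}" unfolding \<pi>_def by (rule switch_perm_permutes[OF C(1)])
  have "\<pi> i \<noteq> \<pi> j" "\<pi> j \<noteq> \<pi> k" "\<pi> i \<noteq> \<pi> k"
    using ijk permutes_inj[OF \<pi>] by (auto dest: injD)
  moreover have "\<pi> i \<in> {1..n}" "\<pi> j \<in> {1..n}" "\<pi> k \<in> {1..n}"
    using permutes_in_image[OF \<pi>] ijk by blast+
  moreover have "P (\<pi> i) h = P (\<pi> j) h" "P (\<pi> j) h = P (\<pi> k) h"
    using eq ijk unfolding C(2) switched_def \<pi>_def by auto
  ultimately show False using P_no_three_equal by blast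
qed

definition essential :: "(nat \<times> nat) set" where
  "essential = {(i, h). 1 \<le> i \<and> i < n \<and> touch i h \<and> \<not> touch i (Suc h)}"

definition vertex_of :: "nat \<times> nat \<Rightarrow> vertex" where
  "vertex_of x = (P (fst x) (snd x), int (snd x))"

lemma ess_points_eq: "ess_points P i = (\<lambda>h. (P i h, int h)) ` {h. touch i h \<and> \<not> touch i (Suc h)}"
proof (intro equalityI subsetI)
  fix v assume v: "v \<in> ess_points P i"
  then obtain h where h: "v = (P i h, int h)" unfolding ess_points_def vertices_def by blast
  have "v \<in> vertices (P (Suc i))" using v unfolding ess_points_def by blast
  then have "touch i h" using h unfolding touch_def by (simp add: mem_vertices)
  moreover have "preceding (P i) v (P i (Suc h), int (Suc h))" unfolding preceding_def h by blast
  then have "(P i (Suc h), int (Suc h)) \<notin> vertices (P (Suc i))"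
    using v vertex_at unfolding ess_points_def by blast
  then have "\<not> touch i (Suc h)" unfolding touch_def by (metis vertex_at)
  ultimately show "v \<in> (\<lambda>h. (P i h, int h)) ` {h. touch i h \<and> \<not> touch i (Suc h)}" using h by blast
next
  fix v assume "v \<in> (\<lambda>h. (P i h, int h)) ` {h. touch i h \<and> \<not> touch i (Suc h)}"
  then obtain h where h: "v = (P i h, int h)" "touch i h" "\<not> touch i (Suc h)" by blast
  have vin: "v \<in> vertices (P i) \<inter> vertices (P (Suc i))"
    using h unfolding touch_def by (auto simp: mem_vertices)
  have "u \<notin> vertices (P i) \<inter> vertices (P (Suc i))"
    if pre: "preceding p v u" and which: "p = P i \<or> p = P (Suc i)" for p u
  proof -
    obtain b where b: "v = (p b, int b)" "u = (p (Suc b), int (Suc b))"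
      using pre unfolding preceding_def by blast
    then have "b = h" using h by simp
    then have "u = (P i (Suc h), int (Suc h)) \<or> u = (P (Suc i) (Suc h), int (Suc h))"
      using b which by auto
    moreover have "nat (int (Suc h)) = Suc h" by simp
    ultimately show ?thesis using h(3) unfolding touch_def by (auto simp: mem_vertices)
  qed
  then show "v \<in> ess_points P i" unfolding ess_points_def using vin by blast
qed

lemma all_ess_points_eq: "all_ess_points n P = vertex_of ` essential"
  unfolding all_ess_points_def ess_points_eq essential_def vertex_of_def by force

lemma finite_essential: "finite essential"
proof (rule finite_subset)
  show "essential \<subseteq> {1..<n} \<times> {..<top_height}"
    using touch_below_top unfolding essential_def by auto
qed simp

lemma vertex_of_inj: "inj_on vertex_of essential"
proof (rule inj_onI)
  fix x y assume xy: "x \<in> essential" "y \<in> essential" "vertex_of x = vertex_of y"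
  obtain i h where x: "x = (i, h)" by (cases x)
  obtain i' h' where y: "y = (i', h')" by (cases y)
  have hh: "h' = h" and eq: "P i' h = P i h" using xy(3) unfolding x y vertex_of_def by auto
  have ess: "1 \<le> i" "i < n" "touch i h" "1 \<le> i'" "i' < n" "touch i' h"
    using xy(1,2) hh unfolding x y essential_def by auto
  then have "i' = i \<or> (i' = Suc i \<and> touch i h) \<or> (Suc i' = i \<and> touch i' h)"
    using P_eq_cases[of i i' h] eq by simp
  moreover have "i' \<noteq> Suc i" using no_touch_triple[of i h] ess by auto
  moreover have "Suc i' \<noteq> i" using no_touch_triple[of i' h] ess by auto
  ultimately have "i' = i" by blast
  then show "x = y" using x y hh by simp
qed

lemma reach_edge_mult_le:
  assumes "(u, v) \<in> reach (edge_mult n P)"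
  shows "fst v \<le> fst u \<and> snd v \<le> snd u"
  using assms unfolding reach_def
proof (induction rule: rtrancl_induct)
  case (step y z)
  then have "0 < edge_mult n P (y, z)" by simp
  then have "{(i, b). i \<in> {1..n} \<and> edge_at (P i) b = (y, z)} \<noteq> {}"
    unfolding edge_mult_def by (metis card.empty less_irrefl)
  then obtain i b where "i \<in> {1..n}" "y = (P i (Suc b), int (Suc b))" "z = (P i b, int b)"
    unfolding edge_at_def by auto
  then show ?case using step P_mono[of i b "Suc b"] by auto
qed simp

lemma compatible_ordering_by_pairs:
  obtains us where "compatible_ordering n P (edge_mult n P) us"
    "\<forall>a b i j. a < length us \<and> b < length us \<and> i \<in> {1..<n} \<and> j \<in> {1..<n} \<and> i < j
       \<and> us ! a \<in> ess_points P i \<and> us ! b \<in> ess_points P j \<longrightarrow> a < b"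
proof -
  define key where "key x = (fst x, - int (snd x))" for x :: "nat \<times> nat"
  have "inj_on key essential" unfolding key_def by (rule inj_onI) (auto simp: prod_eq_iff)
  then obtain xs where xs: "distinct xs" "set xs = essential"
    and sorted: "\<And>a b. a < b \<Longrightarrow> b < length xs \<Longrightarrow> key (xs ! a) < key (xs ! b)"
    using list_sorted_by_key finite_essential by blast
  define us where "us = map vertex_of xs"
  have us_nth: "us ! a = vertex_of (xs ! a)" "xs ! a \<in> essential" if "a < length us" for a
    using that xs(2) nth_mem unfolding us_def by auto
  have "(us ! b, us ! a) \<notin> reach (edge_mult n P)" if ab: "a < b" "b < length us" for a b
  proof
    assume "(us ! b, us ! a) \<in> reach (edge_mult n P)"
    then have "fst (us ! a) \<le> fst (us ! b) \<and> snd (us ! a) \<le> snd (us ! b)"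
      by (rule reach_edge_mult_le)
    moreover obtain i h i' h' where x: "xs ! a = (i, h)" "xs ! b = (i', h')" by fastforce
    ultimately have down: "P i h \<le> P i' h'" "h \<le> h'"
      using us_nth[of a] us_nth[of b] ab unfolding vertex_of_def by auto
    have "key (xs ! a) < key (xs ! b)" using sorted ab unfolding us_def by simp
    then consider "i < i'" | "h' < h" using x unfolding key_def by (auto simp: less_prod_def)
    then show False
    proof cases
      case 1
      have "1 \<le> i" "i' < n" "touch i' h'" using us_nth[of a] us_nth[of b] ab x unfolding essential_def by auto
      then show False using 1 down P_two_apart_less[of i "Suc i'" h' h] unfolding touch_def by simp
    qed (use down in simp)
  qed
  then have "compatible_ordering n P (edge_mult n P) us"
    unfolding compatible_ordering_def us_def
    using xs all_ess_points_eq vertex_of_inj by (simp add: distinct_map)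
  moreover have "a < b"
    if ab: "a < length us" "b < length us" "i < j" "i \<in> {1..<n}" "j \<in> {1..<n}"
      "us ! a \<in> ess_points P i" "us ! b \<in> ess_points P j" for a b i j
  proof -
    obtain h h' where hh: "(i, h) \<in> essential" "(j, h') \<in> essential"
      "us ! a = vertex_of (i, h)" "us ! b = vertex_of (j, h')"
      using ab unfolding ess_points_eq essential_def vertex_of_def by auto
    then have "xs ! a = (i, h)" "xs ! b = (j, h')"
      using us_nth ab(1,2) vertex_of_inj by (metis inj_onD)+
    then have "key (xs ! a) < key (xs ! b)" using ab(3) unfolding key_def by simp
    then show "a < b"
      using sorted[of b a] ab(1,2) unfolding us_def by (cases a b rule: linorder_cases) auto
  qed
  ultimately show ?thesis using that by blast
qed

end

theorem mainTheorem2: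
  fixes lam mu :: "nat \<Rightarrow> nat" and n :: nat and H :: subnetwork
    and P :: "nat \<Rightarrow> lpath" and \<sigma> :: "nat \<Rightarrow> nat"
  assumes "is_partition lam" and "is_partition mu" and "part_contained mu lam"
    and "length_le lam n"
    and "\<not> has_3x2_block lam mu"
    and "path_family lam mu n P \<sigma>" and "noncrossing_family n P" and "covers n P H"
  shows "gen_wiring_diagram lam mu n H
    \<and> (\<exists>!I. I \<subseteq> {1..<n} \<and> (\<exists>e::int. beta lam mu n H = (\<lambda>w. (2::complex) powi e * BB n I w)))
    \<and> (\<forall>I. I \<subseteq> {1..<n} \<and> (\<exists>e::int. beta lam mu n H = (\<lambda>w. (2::complex) powi e * BB n I w))
           \<longrightarrow> (\<forall>i\<in>{1..<n}. paths_intersect (P i) (P (Suc i)) \<longleftrightarrow> i \<in> I))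
    \<and> (\<exists>us. compatible_ordering n P H us
        \<and> (\<forall>a b i j. a < length us \<and> b < length us \<and> i \<in> {1..<n} \<and> j \<in> {1..<n} \<and> i < j
             \<and> us ! a \<in> ess_points P i \<and> us ! b \<in> ess_points P j \<longrightarrow> a < b))"
proof -
  interpret noncrossing_no_3x2 lam mu n P \<sigma>
    using assms by unfold_locales
  have H: "H = edge_mult n P" using assms(8) unfolding covers_def by (simp add: fun_eq_iff)
  define e where "e = int (card divergences - card touching_pairs)"
  have beta: "beta lam mu n H = (\<lambda>w. (2::complex) powi e * BB n touching_pairs w)"
    unfolding H e_def by (rule beta_eq_scaled_BB)
  have unique: "I = touching_pairs"
    if "I \<subseteq> {1..<n}" "beta lam mu n H = (\<lambda>w. (2::complex) powi e' * BB n I w)" for I e'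
    using scaled_BB_inj[OF that(1) touching_pairs_subset] that(2) beta by metis
  obtain us where "compatible_ordering n P (edge_mult n P) us"
    "\<forall>a b i j. a < length us \<and> b < length us \<and> i \<in> {1..<n} \<and> j \<in> {1..<n} \<and> i < j
       \<and> us ! a \<in> ess_points P i \<and> us ! b \<in> ess_points P j \<longrightarrow> a < b"
    by (rule compatible_ordering_by_pairs)
  moreover have "\<exists>!I. I \<subseteq> {1..<n} \<and> (\<exists>e::int. beta lam mu n H = (\<lambda>w. (2::complex) powi e * BB n I w))"
    using touching_pairs_subset beta unique by blast
  moreover have "\<forall>I. I \<subseteq> {1..<n} \<and> (\<exists>e::int. beta lam mu n H = (\<lambda>w. (2::complex) powi e * BB n I w))
      \<longrightarrow> (\<forall>i\<in>{1..<n}. paths_intersect (P i) (P (Suc i)) \<longleftrightarrow> i \<in> I)"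
    using unique paths_intersect_iff_touching by auto
  ultimately show ?thesis using gen_wiring_diagram unfolding H by blast
qed

end
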